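(* Let $d\in\mathbb{N}^+$, $a<b$, $p\in[1,\infty)$, and let $N\ge 36d(2d+1)$ and $L\ge 11$ be integers. Then $\mathscr{H}_d(N,L)$ (restricted to $[a,b]^d$) is dense in $L^p([a,b]^d)$; i.e., for every $f\in L^p([a,b]^d)$ and $\varepsilon>0$ there exists $\phi\in\mathscr{H}_d(N,L)$ with $\|\phi-f\|_{L^p([a,b]^d)}<\varepsilon$.
   Context: Let $\sigma_1:\mathbb{R}\to\mathbb{R}$ be the continuous triangular-wave function of period $2$: $\sigma_1(x)=|x|$ for $x\in[-1,1]$ and $\sigma_1(x+2)=\sigma_1(x)$ for all $x$. Let $\sigma_2(x)=x/(|x|+1)$. The activation function is $\sigma(x)=\sigma_1(x)$ for $x\ge 0$ and $\sigma(x)=\sigma_2(x)$ for $x<0$, applied to vectors entrywise. For $N,L\in\mathbb{N}^+$, $\mathscr{H}_d(N,L)$ is the set of all functions $\phi:\mathbb{R}^d\to\mathbb{R}$ of the form $\phi=\mathcal{L}_L\circ\sigma\circ\mathcal{L}_{L-1}\circ\cdots\circ\sigma\circ\mathcal{L}_1\circ\sigma\circ\mathcal{L}_0$, where $\mathcal{L}_0:\mathbb{R}^d\to\mathbb{R}^N$, $\mathcal{L}_i:\mathbb{R}^N\to\mathbb{R}^N$ ($1\le i\le L-1$), $\mathcal{L}_L:\mathbb{R}^N\to\mathbb{R}$ are arbitrary affine maps. *)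

theory Defs
  imports "HOL-Analysis.Analysis"
begin

text \<open>Triangular wave of period 2: equals abs x on [-1,1], 2-periodic.\<close>
definition sigma1 :: "real \<Rightarrow> real" where
  "sigma1 x = \<bar>x - 2 * real_of_int \<lfloor>(x + 1) / 2\<rfloor>\<bar>"

definition sigma2 :: "real \<Rightarrow> real" where
  "sigma2 x = x / (\<bar>x\<bar> + 1)"

definition act :: "real \<Rightarrow> real" where
  "act x = (if x \<ge> 0 then sigma1 x else sigma2 x)"

text \<open>Hidden layers h \<mapsto> act (W h + c) on R^N (vectors as nat-indexed functions,
  only indices < N are relevant).\<close>
fun hidden_layers :: "nat \<Rightarrow> ((nat \<Rightarrow> nat \<Rightarrow> real) \<times> (nat \<Rightarrow> real)) list
    \<Rightarrow> (nat \<Rightarrow> real) \<Rightarrow> (nat \<Rightarrow> real)" where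
  "hidden_layers N [] h = h"
| "hidden_layers N ((W, c) # ls) h =
     hidden_layers N ls (\<lambda>i. act ((\<Sum>j<N. W i j * h j) + c i))"

text \<open>The hypothesis class H_d(N,L), with d = CARD('n).\<close>
definition NN_class :: "nat \<Rightarrow> nat \<Rightarrow> (real^'n \<Rightarrow> real) set" where
  "NN_class N L = {\<phi>. \<exists>(W0 :: nat \<Rightarrow> 'n \<Rightarrow> real) (c0 :: nat \<Rightarrow> real) Ws
       (v :: nat \<Rightarrow> real) (e :: real).
     length Ws = L - 1 \<and>
     \<phi> = (\<lambda>x. (\<Sum>j<N. v j * hidden_layers N Ws
                 (\<lambda>i. act ((\<Sum>k\<in>UNIV. W0 i k * x $ k) + c0 i)) j) + e)}"

definition cube :: "real \<Rightarrow> real \<Rightarrow> (real^'n) set" where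
  "cube a b = cbox (\<chi> i. a) (\<chi> i. b)"

end

theory Submission
  imports Defs "HOL-Computational_Algebra.Polynomial"
begin

text \<open>
  Continuous functions are dense in \<open>L\<^sup>p\<close>, so it suffices to approximate a continuous
  function \<open>g\<close>. Divide the cube into \<open>K\<^sup>d\<close> cells and discard the points within \<open>\<eta>\<close>
  of a cell boundary, a set of small measure. At the remaining points the triangle wave of a
  scaled coordinate \<open>s\<close> and of \<open>s + 1/2\<close> determine \<open>frac s\<close>, hence \<open>\<lfloor>s\<rfloor>\<close>; so four
  layers compute the base \<open>K\<close> code \<open>m\<close> of the cell and, through the negative branch of
  the activation, the number \<open>1 / (m + c + 1)\<close>. For suitable \<open>c\<close> these numbers are
  linearly independent over \<open>\<int>\<close>, and Kronecker's theorem yields a single weight \<open>t\<close> for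
  which the triangle wave of \<open>t / (m + c + 1)\<close> approximates the value of \<open>g\<close> at the corner
  of cell \<open>m\<close>, for all \<open>m\<close> at once. The remaining layers pass this value on, so already
  \<open>N \<ge> 4 d\<close> and \<open>L \<ge> 5\<close> suffice.
\<close>

lemma act_borel_measurable [measurable]: "act \<in> borel_measurable borel"
  unfolding act_def sigma1_def sigma2_def by measurable

lemma sigma1_add_even: "sigma1 (x + 2 * real_of_int k) = sigma1 x"
proof -
  have "(x + 2 * real_of_int k + 1) / 2 = (x + 1) / 2 + real_of_int k"
    by (simp add: field_simps)
  then have "\<lfloor>(x + 2 * real_of_int k + 1) / 2\<rfloor> = \<lfloor>(x + 1) / 2\<rfloor> + k"
    by (simp only: floor_add_int)
  then show ?thesis
    unfolding sigma1_def by simp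
qed

lemma sigma1_eq_self: "0 \<le> x \<Longrightarrow> x \<le> 1 \<Longrightarrow> sigma1 x = x"
proof (cases "x = 1")
  case False
  assume "0 \<le> x" "x \<le> 1"
  then have "\<lfloor>(x + 1) / 2\<rfloor> = 0"
    using False by (intro floor_unique) auto
  then show ?thesis
    using \<open>0 \<le> x\<close> unfolding sigma1_def by simp
qed (simp add: sigma1_def)

lemma sigma1_eq_two_minus: "1 \<le> x \<Longrightarrow> x \<le> 2 \<Longrightarrow> sigma1 x = 2 - x"
proof -
  assume "1 \<le> x" "x \<le> 2"
  then have "\<lfloor>(x + 1) / 2\<rfloor> = 1"
    by (intro floor_unique) auto
  then show ?thesis
    using \<open>1 \<le> x\<close> \<open>x \<le> 2\<close> unfolding sigma1_def by simp
qed

lemma sigma1_eq_minus: "-1 \<le> x \<Longrightarrow> x \<le> 0 \<Longrightarrow> sigma1 x = - x"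
proof -
  assume "-1 \<le> x" "x \<le> 0"
  then have "\<lfloor>(x + 1) / 2\<rfloor> = 0"
    by (intro floor_unique) auto
  then show ?thesis
    using \<open>x \<le> 0\<close> unfolding sigma1_def by simp
qed

lemma sigma1_nonneg: "0 \<le> sigma1 x"
  unfolding sigma1_def by simp

lemma sigma1_le_one: "sigma1 x \<le> 1"
proof -
  have "real_of_int \<lfloor>(x + 1) / 2\<rfloor> \<le> (x + 1) / 2" "(x + 1) / 2 < real_of_int \<lfloor>(x + 1) / 2\<rfloor> + 1"
    by linarith+
  then have "-1 \<le> x - 2 * real_of_int \<lfloor>(x + 1) / 2\<rfloor>" "x - 2 * real_of_int \<lfloor>(x + 1) / 2\<rfloor> \<le> 1"
    by (simp_all add: field_simps)
  then show ?thesis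
    unfolding sigma1_def by simp
qed

lemma sigma1_perturb:
  assumes "0 \<le> y" "y \<le> 1" "\<bar>e\<bar> \<le> 1"
  shows "\<bar>sigma1 (y + e) - y\<bar> \<le> \<bar>e\<bar>"
  using assms sigma1_eq_minus[of "y + e"] sigma1_eq_self[of "y + e"] sigma1_eq_two_minus[of "y + e"]
  by (cases "y + e \<le> 0"; cases "y + e \<le> 1") auto

lemma act_nonneg: "0 \<le> x \<Longrightarrow> act x = sigma1 x"
  unfolding act_def by simp

lemma act_neg: "0 < y \<Longrightarrow> act (- y) = - y / (y + 1)"
  unfolding act_def sigma2_def by simp

lemma act_eq_self: "0 \<le> x \<Longrightarrow> x \<le> 1 \<Longrightarrow> act x = x"
  by (simp add: act_nonneg sigma1_eq_self)

lemma act_tent: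
  assumes "-1 \<le> u" "u \<le> 1"
  shows "act (u + 1) = 1 - \<bar>u\<bar>"
  using assms sigma1_eq_two_minus[of "u + 1"] sigma1_eq_self[of "u + 1"]
  by (cases "0 \<le> u") (auto simp: act_nonneg)

lemma abs_act_le_one: "\<bar>act x\<bar> \<le> 1"
proof (cases "0 \<le> x")
  case True
  then show ?thesis
    using sigma1_nonneg[of x] sigma1_le_one[of x] by (simp add: act_nonneg)
next
  case False
  have "\<bar>x\<bar> / (\<bar>x\<bar> + 1) \<le> 1"
    by simp
  then show ?thesis
    using False unfolding act_def sigma2_def by (simp add: abs_div)
qed

definition act_layer :: "nat \<Rightarrow> (nat \<Rightarrow> nat \<Rightarrow> real) \<Rightarrow> (nat \<Rightarrow> real) \<Rightarrow> (nat \<Rightarrow> real) \<Rightarrow> nat \<Rightarrow> real"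
  where "act_layer N W c h i = act ((\<Sum>j<N. W i j * h j) + c i)"

lemma hidden_layers_snoc:
  "hidden_layers N (Ws @ [(W, c)]) h = act_layer N W c (hidden_layers N Ws h)"
proof (induction Ws arbitrary: h)
  case (Cons l Ws)
  then show ?case
    by (cases l) simp
qed (simp add: act_layer_def [abs_def])

lemma abs_hidden_layers_le_one:
  "(\<And>j. \<bar>h j\<bar> \<le> 1) \<Longrightarrow> \<bar>hidden_layers N Ws h i\<bar> \<le> 1"
proof (induction Ws arbitrary: h)
  case (Cons l Ws)
  then show ?case
    by (cases l) (simp add: abs_act_le_one)
qed simp

lemma hidden_layers_measurable:
  assumes "\<And>j. (\<lambda>x. h x j) \<in> borel_measurable M"
  shows "(\<lambda>x. hidden_layers N Ws (h x) i) \<in> borel_measurable M"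
  using assms
proof (induction Ws arbitrary: h)
  case (Cons l Ws)
  obtain W c where "l = (W, c)"
    by (cases l)
  moreover have "(\<lambda>x. act ((\<Sum>j<N. W i j * h x j) + c i)) \<in> borel_measurable M" for i
    using Cons.prems by measurable
  ultimately show ?case
    using Cons.IH by simp
qed simp

definition hidden_features :: "nat \<Rightarrow> nat \<Rightarrow> (real^'n \<Rightarrow> nat \<Rightarrow> real) set" where
  "hidden_features N L = {F. \<exists>(W0 :: nat \<Rightarrow> 'n \<Rightarrow> real) (c0 :: nat \<Rightarrow> real) Ws.
     length Ws = L - 1 \<and>
     F = (\<lambda>x. hidden_layers N Ws (\<lambda>i. act ((\<Sum>k\<in>UNIV. W0 i k * x $ k) + c0 i)))}"

lemma input_layer_in_hidden_features:
  "(\<lambda>x i. act ((\<Sum>k\<in>UNIV. W0 i k * x $ k) + c0 i)) \<in> hidden_features N 1"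
  unfolding hidden_features_def by (intro CollectI exI[of _ W0] exI[of _ c0] exI[of _ "[]"]) simp

lemma act_layer_in_hidden_features:
  assumes "F \<in> hidden_features N L" "1 \<le> L"
  shows "(\<lambda>x. act_layer N W c (F x)) \<in> hidden_features N (Suc L)"
proof -
  obtain W0 c0 Ws where "length Ws = L - 1"
    and "F = (\<lambda>x. hidden_layers N Ws (\<lambda>i. act ((\<Sum>k\<in>UNIV. W0 i k * x $ k) + c0 i)))"
    using assms(1) unfolding hidden_features_def by blast
  then show ?thesis
    using assms(2) unfolding hidden_features_def
    by (intro CollectI exI[of _ W0] exI[of _ c0] exI[of _ "Ws @ [(W, c)]"])
       (simp add: hidden_layers_snoc)
qed

lemma abs_hidden_feature_le_one: "F \<in> hidden_features N L \<Longrightarrow> \<bar>F x i\<bar> \<le> 1"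
  unfolding hidden_features_def by (auto intro: abs_hidden_layers_le_one abs_act_le_one)

lemma hidden_feature_measurable:
  "F \<in> hidden_features N L \<Longrightarrow> (\<lambda>x. F x i) \<in> borel_measurable borel"
  unfolding hidden_features_def by (auto intro!: hidden_layers_measurable)

lemma NN_classI:
  assumes "F \<in> hidden_features N L"
  shows "(\<lambda>x. (\<Sum>j<N. v j * F x j) + e) \<in> NN_class N L"
proof -
  obtain W0 c0 Ws where "length Ws = L - 1"
    and "F = (\<lambda>x. hidden_layers N Ws (\<lambda>i. act ((\<Sum>k\<in>UNIV. W0 i k * x $ k) + c0 i)))"
    using assms unfolding hidden_features_def by blast
  then show ?thesis
    unfolding NN_class_def by (intro CollectI exI[of _ W0] exI[of _ c0] exI[of _ Ws] exI[of _ v] exI[of _ e]) simp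
qed

lemma NN_classE:
  assumes "\<phi> \<in> NN_class N L"
  obtains F v e where "F \<in> hidden_features N L" "\<phi> = (\<lambda>x. (\<Sum>j<N. v j * F x j) + e)"
proof -
  obtain W0 c0 Ws v e where "length Ws = L - 1" and \<phi>:
    "\<phi> = (\<lambda>x. (\<Sum>j<N. v j * hidden_layers N Ws (\<lambda>i. act ((\<Sum>k\<in>UNIV. W0 i k * x $ k) + c0 i)) j) + e)"
    using assms unfolding NN_class_def by blast
  then have "(\<lambda>x. hidden_layers N Ws (\<lambda>i. act ((\<Sum>k\<in>UNIV. W0 i k * x $ k) + c0 i))) \<in> hidden_features N L"
    unfolding hidden_features_def by blast
  then show thesis
    using \<phi> by (rule that)
qed

lemma NN_class_measurable: "\<phi> \<in> NN_class N L \<Longrightarrow> \<phi> \<in> borel_measurable borel"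
proof (erule NN_classE)
  fix F v e
  assume F: "F \<in> hidden_features N L" and \<phi>: "\<phi> = (\<lambda>x. (\<Sum>j<N. v j * F x j) + e)"
  have "(\<lambda>x. F x j) \<in> borel_measurable borel" for j
    using F by (rule hidden_feature_measurable)
  then show ?thesis
    unfolding \<phi> by measurable
qed

lemma unit_readout_in_NN_class:
  assumes "F \<in> hidden_features N L" "0 < N"
  shows "(\<lambda>x. v * F x 0 + e) \<in> NN_class N L"
proof -
  have "(\<Sum>j<N. (if j = 0 then v else 0) * F x j) = v * F x 0" for x
    using assms(2) by (simp add: if_distrib[of "\<lambda>z. z * _"] sum.delta cong: if_cong)
  then show ?thesis
    using NN_classI[OF assms(1), of "\<lambda>j. if j = 0 then v else 0" e] by simp
qed

lemma act_layer_single_input: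
  "0 < N \<Longrightarrow> act_layer N (\<lambda>i j. if j = 0 then w else 0) (\<lambda>i. b) h i = act (w * h 0 + b)"
  unfolding act_layer_def by (simp add: if_distrib[of "\<lambda>z. z * _"] sum.delta cong: if_cong)

lemma identity_layers:
  assumes "F \<in> hidden_features N L" "1 \<le> L" "0 < N" "\<And>x. 0 \<le> F x 0"
  obtains G where "G \<in> hidden_features N (L + n)" "\<And>x. G x 0 = F x 0"
proof (induction n arbitrary: thesis)
  case 0
  then show ?case
    using assms(1) by simp
next
  case (Suc n)
  then obtain G where G: "G \<in> hidden_features N (L + n)" and G0: "\<And>x. G x 0 = F x 0"
    by blast
  define G' where "G' = (\<lambda>x. act_layer N (\<lambda>i j. if j = 0 then 1 else 0) (\<lambda>i. 0) (G x))"
  have "G' \<in> hidden_features N (L + Suc n)"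
    unfolding G'_def using act_layer_in_hidden_features[OF G] assms(2) by simp
  moreover have "G' x 0 = F x 0" for x
    using act_layer_single_input[OF assms(3)] abs_hidden_feature_le_one[OF assms(1), of x 0] assms(4)[of x]
    unfolding G'_def by (simp add: G0 act_eq_self)
  ultimately show ?case
    by (rule Suc.prems)
qed

text \<open>Adding the even integer \<open>2 Z\<close> to the argument keeps it in the
  half line where \<^const>\<open>act\<close> is the triangle wave, without changing its value.\<close>
lemma triangle_wave_layer:
  assumes "F \<in> hidden_features N L" "1 \<le> L" "0 < N"
  obtains G where "G \<in> hidden_features N (Suc L)" "\<And>x. G x 0 = sigma1 (t * (F x 0 + 1))"
proof
  define Z where "Z = \<lceil>\<bar>t\<bar>\<rceil>"
  show "(\<lambda>x. act_layer N (\<lambda>i j. if j = 0 then t else 0) (\<lambda>i. t + 2 * of_int Z) (F x))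
    \<in> hidden_features N (Suc L)"
    using assms(1,2) by (rule act_layer_in_hidden_features)
  fix x
  have "\<bar>t * (F x 0 + 1)\<bar> \<le> \<bar>t\<bar> * 2"
    unfolding abs_mult using abs_hidden_feature_le_one[OF assms(1), of x 0]
    by (intro mult_left_mono) auto
  moreover have "\<bar>t\<bar> \<le> of_int Z"
    unfolding Z_def by linarith
  ultimately have "0 \<le> t * (F x 0 + 1) + 2 * of_int Z"
    by linarith
  have "act_layer N (\<lambda>i j. if j = 0 then t else 0) (\<lambda>i. t + 2 * of_int Z) (F x) 0
      = act (t * (F x 0 + 1) + 2 * of_int Z)"
    by (simp add: act_layer_single_input[OF assms(3)] algebra_simps)
  also have "\<dots> = sigma1 (t * (F x 0 + 1))"
    using \<open>0 \<le> t * (F x 0 + 1) + 2 * of_int Z\<close> by (simp add: act_nonneg sigma1_add_even)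
  finally show "act_layer N (\<lambda>i j. if j = 0 then t else 0) (\<lambda>i. t + 2 * of_int Z) (F x) 0
    = sigma1 (t * (F x 0 + 1))" .
qed

section \<open>Rationally independent reciprocals and the Kronecker theorem\<close>

text \<open>Clearing denominators in \<open>\<Sum>m<J. r m / (m + 1 + x)\<close>.\<close>
definition reciprocal_sum_poly :: "nat \<Rightarrow> (nat \<Rightarrow> int) \<Rightarrow> real poly" where
  "reciprocal_sum_poly J r = (\<Sum>m<J. smult (of_int (r m)) (\<Prod>i\<in>{..<J} - {m}. [:of_nat i + 1, 1:]))"

lemma poly_reciprocal_sum_poly:
  "poly (reciprocal_sum_poly J r) x = (\<Sum>m<J. of_int (r m) * (\<Prod>i\<in>{..<J} - {m}. of_nat i + 1 + x))"
  by (simp add: reciprocal_sum_poly_def poly_sum poly_prod)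

lemma reciprocal_sum_poly_nonzero:
  assumes "m0 < J" "r m0 \<noteq> 0"
  shows "reciprocal_sum_poly J r \<noteq> 0"
proof
  define x :: real where "x = - (of_nat m0 + 1)"
  have vanish: "(\<Prod>i\<in>{..<J} - {m}. of_nat i + 1 + x) = 0" if "m < J" "m \<noteq> m0" for m
    using assms(1) that unfolding x_def by (intro prod_zero bexI[of _ m0]) auto
  have "(\<Sum>m\<in>{..<J} - {m0}. of_int (r m) * (\<Prod>i\<in>{..<J} - {m}. of_nat i + 1 + x)) = 0"
    by (rule sum.neutral) (simp add: vanish)
  then have "poly (reciprocal_sum_poly J r) x = of_int (r m0) * (\<Prod>i\<in>{..<J} - {m0}. of_nat i + 1 + x)"
    unfolding poly_reciprocal_sum_poly using assms(1) by (simp add: sum.remove[of _ m0])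
  moreover have "(\<Prod>i\<in>{..<J} - {m0}. of_nat i + 1 + x) \<noteq> 0"
    unfolding x_def by (subst prod_zero_iff) auto
  moreover assume "reciprocal_sum_poly J r = 0"
  ultimately show False
    using assms(2) by simp
qed

lemma poly_reciprocal_sum_poly_pos:
  assumes "0 < x"
  shows "poly (reciprocal_sum_poly J r) x
    = (\<Sum>m<J. of_int (r m) / (of_nat m + x + 1)) * (\<Prod>i<J. of_nat i + 1 + x)"
proof -
  have "of_int (r m) / (of_nat m + x + 1) * (\<Prod>i<J. of_nat i + 1 + x)
      = of_int (r m) * (\<Prod>i\<in>{..<J} - {m}. of_nat i + 1 + x)" if "m < J" for m
  proof -
    have "(\<Prod>i<J. of_nat i + 1 + x) = (of_nat m + 1 + x) * (\<Prod>i\<in>{..<J} - {m}. of_nat i + 1 + x)"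
      using that by (simp add: prod.remove)
    then show ?thesis
      using assms by (simp add: field_simps)
  qed
  then show ?thesis
    unfolding poly_reciprocal_sum_poly sum_distrib_right by (intro sum.cong) auto
qed

text \<open>Only countably many \<open>c\<close> are roots of one of the countably many nonzero
  polynomials \<^const>\<open>reciprocal_sum_poly\<close>, and \<open>]0, 1[\<close> is uncountable.\<close>
lemma exists_shift_reciprocals_independent:
  "\<exists>c::real. 0 < c \<and> (\<forall>r :: nat \<Rightarrow> int.
     (\<Sum>m<J. of_int (r m) / (of_nat m + c + 1)) = 0 \<longrightarrow> (\<forall>m<J. r m = 0))"
proof -
  define R where "R = (\<Pi>\<^sub>E m\<in>{..<J}. UNIV :: int set) - {r. \<forall>m<J. r m = 0}"
  define Roots where "Roots = (\<Union>r\<in>R. {x. poly (reciprocal_sum_poly J r) x = 0})"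
  have "countable Roots"
    unfolding Roots_def
  proof (intro countable_UN)
    show "countable R"
      unfolding R_def by (intro countable_Diff countable_PiE) auto
    show "countable {x. poly (reciprocal_sum_poly J r) x = 0}" if "r \<in> R" for r
      using that reciprocal_sum_poly_nonzero poly_roots_finite unfolding R_def
      by (blast intro: countable_finite)
  qed
  moreover have "uncountable {0<..<1::real}"
    using uncountable_open_interval[of 0 1] by simp
  ultimately obtain c where c: "c \<in> {0<..<1::real}" "c \<notin> Roots"
    by (metis countable_subset subsetI)
  have "r m = 0" if sum0: "(\<Sum>m<J. of_int (r m) / (of_nat m + c + 1)) = 0" and "m < J" for r m
  proof (rule ccontr)
    assume "r m \<noteq> 0"
    have "(\<Sum>m<J. of_int (restrict r {..<J} m) / (of_nat m + c + 1)) = 0"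
      using sum0 by simp
    then have "poly (reciprocal_sum_poly J (restrict r {..<J})) c = 0"
      using c(1) by (simp add: poly_reciprocal_sum_poly_pos)
    moreover have "restrict r {..<J} \<in> R"
      unfolding R_def using \<open>m < J\<close> \<open>r m \<noteq> 0\<close> by auto
    ultimately show False
      using c(2) unfolding Roots_def by blast
  qed
  then show ?thesis
    using c(1) by auto
qed

text \<open>The values \<open>1 / (m + c + 1)\<close> are linearly independent over \<open>\<int>\<close>, so by Kronecker's
  theorem a single dilation \<open>t\<close> moves them simultaneously close to prescribed points modulo the
  period \<open>2\<close> of the triangle wave.\<close>
lemma triangle_wave_interpolation:
  fixes y :: "nat \<Rightarrow> real"
  assumes y: "\<And>m. m < J \<Longrightarrow> 0 \<le> y m \<and> y m \<le> 1" and \<epsilon>: "0 < \<epsilon>" "\<epsilon> \<le> 1"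
  obtains c t where "0 < c" "\<And>m. m < J \<Longrightarrow> \<bar>sigma1 (t / (of_nat m + c + 1)) - y m\<bar> < \<epsilon>"
proof -
  obtain c :: real where c: "0 < c"
    and indep: "\<And>r :: nat \<Rightarrow> int. (\<Sum>m<J. of_int (r m) / (of_nat m + c + 1)) = 0 \<Longrightarrow> \<forall>m<J. r m = 0"
    using exists_shift_reciprocals_independent[of J] by blast
  define \<theta> where "\<theta> m = 1 / (of_nat m + c + 1)" for m
  have inj: "inj_on \<theta> {..<J}"
    unfolding \<theta>_def inj_on_def using c by (auto simp: field_simps)
  interpret int_module: Modules.module "\<lambda>r. (*) (real_of_int r)"
    by unfold_locales (simp_all add: algebra_simps)
  have "\<not> int_module.dependent (\<theta> ` {..<J})"
    unfolding int_module.dependent_finite[OF finite_imageI[OF finite_lessThan]]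
  proof
    assume "\<exists>u. (\<exists>v\<in>\<theta> ` {..<J}. u v \<noteq> 0) \<and> (\<Sum>v\<in>\<theta> ` {..<J}. real_of_int (u v) * v) = 0"
    then obtain u m where "m < J" "u (\<theta> m) \<noteq> 0"
      and sum0: "(\<Sum>v\<in>\<theta> ` {..<J}. real_of_int (u v) * v) = 0"
      by blast
    have "(\<Sum>m<J. of_int (u (\<theta> m)) / (of_nat m + c + 1)) = 0"
      using sum0 unfolding sum.reindex[OF inj] by (simp add: \<theta>_def)
    then show False
      using indep[of "\<lambda>m. u (\<theta> m)"] \<open>m < J\<close> \<open>u (\<theta> m) \<noteq> 0\<close> by blast
  qed
  then obtain t h where th: "\<And>m. m < J \<Longrightarrow> \<bar>t * \<theta> m - of_int (h m) - y m / 2\<bar> < \<epsilon> / 2"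
    using Kronecker_thm_1[of \<theta> J "\<epsilon> / 2" "\<lambda>m. y m / 2"] inj \<epsilon>(1) by auto
  show ?thesis
  proof (rule that[of c "2 * t"])
    fix m
    assume m: "m < J"
    define e where "e = 2 * t * \<theta> m - 2 * of_int (h m) - y m"
    have e: "\<bar>e\<bar> < \<epsilon>"
      using th[OF m] unfolding e_def by linarith
    have "sigma1 (2 * t / (of_nat m + c + 1)) = sigma1 ((y m + e) + 2 * of_int (h m))"
      unfolding e_def \<theta>_def by simp
    also have "\<dots> = sigma1 (y m + e)"
      by (rule sigma1_add_even)
    finally show "\<bar>sigma1 (2 * t / (of_nat m + c + 1)) - y m\<bar> < \<epsilon>"
      using sigma1_perturb[of "y m" e] y[OF m] e \<epsilon>(2) by simp
  qed (rule c)
qed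

lemma mixed_radix_less:
  fixes a :: "nat \<Rightarrow> nat"
  assumes "\<And>q. q < d \<Longrightarrow> a q < K"
  shows "(\<Sum>q<d. a q * K ^ q) < K ^ d"
  using assms
proof (induction d)
  case (Suc d)
  have "(\<Sum>q<Suc d. a q * K ^ q) < K ^ d + a d * K ^ d"
    using Suc by simp
  also have "\<dots> \<le> K * K ^ d"
    using Suc.prems[of d] mult_le_mono1[of "Suc (a d)" K "K ^ d"] by simp
  finally show ?case
    by simp
qed simp

lemma mixed_radix_digit:
  fixes a :: "nat \<Rightarrow> nat"
  assumes "\<And>q. q < d \<Longrightarrow> a q < K" "i < d"
  shows "(\<Sum>q<d. a q * K ^ q) div K ^ i mod K = a i"
  using assms
proof (induction d arbitrary: a i)
  case (Suc d)
  have K: "0 < K" and a0: "a 0 < K"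
    using Suc.prems(1)[of 0] by auto
  have sum: "(\<Sum>q<Suc d. a q * K ^ q) = a 0 + K * (\<Sum>q<d. a (Suc q) * K ^ q)"
    by (simp only: sum.lessThan_Suc_shift) (simp add: sum_distrib_left ac_simps)
  show ?case
  proof (cases i)
    case 0
    then show ?thesis
      unfolding sum using a0 by simp
  next
    case (Suc j)
    have "(a 0 + K * (\<Sum>q<d. a (Suc q) * K ^ q)) div K = (\<Sum>q<d. a (Suc q) * K ^ q)"
      using K a0 by simp
    then have "(\<Sum>q<Suc d. a q * K ^ q) div K ^ i = (\<Sum>q<d. a (Suc q) * K ^ q) div K ^ j"
      unfolding sum Suc by (simp add: div_mult2_eq)
    then show ?thesis
      using Suc.IH[of "a \<circ> Suc" j] Suc.prems \<open>i = Suc j\<close> by simp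
  qed
qed simp

section \<open>A network that reads off the grid cell of a point\<close>

text \<open>\<open>act s\<close> is \<open>frac s\<close> or \<open>1 - frac s\<close> according to the parity of \<open>\<lfloor>s\<rfloor>\<close>,
  and \<open>act (s + 1/2)\<close> detects that parity.\<close>
lemma act_parity:
  assumes "0 \<le> s" "0 < \<eta>" "\<eta> \<le> frac s" "frac s \<le> 1 - \<eta>"
  shows "(act s = frac s \<and> 1/2 + \<eta> \<le> act (s + 1/2) \<and> act (s + 1/2) \<le> 1) \<or>
    (act s = 1 - frac s \<and> 0 \<le> act (s + 1/2) \<and> act (s + 1/2) \<le> 1/2 - \<eta>)"
proof -
  define f where "f = frac s"
  have f: "0 \<le> f" "f < 1"
    unfolding f_def by (auto simp: frac_lt_1)
  obtain j where "\<lfloor>s\<rfloor> = 2 * j \<or> \<lfloor>s\<rfloor> = 2 * j + 1"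
    by (metis evenE oddE)
  then show ?thesis
  proof
    assume "\<lfloor>s\<rfloor> = 2 * j"
    then have "s = f + 2 * of_int j"
      unfolding f_def frac_def by simp
    then have "act s = sigma1 f" "act (s + 1/2) = sigma1 (f + 1/2)"
      using assms(1) sigma1_add_even[of f j] sigma1_add_even[of "f + 1/2" j]
      by (simp_all add: act_nonneg add_ac)
    moreover have "sigma1 (f + 1/2) = (if f + 1/2 \<le> 1 then f + 1/2 else 3/2 - f)"
      using f sigma1_eq_self[of "f + 1/2"] sigma1_eq_two_minus[of "f + 1/2"] by auto
    ultimately show ?thesis
      using assms(3,4) f unfolding f_def by (simp add: sigma1_eq_self)
  next
    assume "\<lfloor>s\<rfloor> = 2 * j + 1"
    then have "s = (f + 1) + 2 * of_int j" "s + 1/2 = (f - 1/2) + 2 * of_int (j + 1)"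
      unfolding f_def frac_def by simp_all
    then have "act s = sigma1 (f + 1)" "act (s + 1/2) = sigma1 (f - 1/2)"
      using assms(1) by (simp_all only: act_nonneg sigma1_add_even)
    moreover have "sigma1 (f + 1) = 1 - f"
      using f sigma1_eq_two_minus[of "f + 1"] by simp
    moreover have "sigma1 (f - 1/2) = (if f \<le> 1/2 then 1/2 - f else f - 1/2)"
      using f sigma1_eq_minus[of "f - 1/2"] sigma1_eq_self[of "f - 1/2"] by auto
    ultimately show ?thesis
      using assms(3,4) f unfolding f_def by simp
  qed
qed

text \<open>Two tents of width \<open>\<Lambda> + 1\<close> centred at \<open>0\<close> and \<open>1\<close>, applied to
  \<open>z = \<Lambda> (B - 1/2) + 1/2\<close>, turn a value \<open>B\<close> bounded away from \<open>1/2\<close> into a sign.\<close>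
lemma act_step_detector:
  assumes "0 < \<eta>" "0 \<le> B" "B \<le> 1" "B \<le> 1/2 - \<eta> \<or> 1/2 + \<eta> \<le> B"
  defines "\<Lambda> \<equiv> 1 / (2 * \<eta>)"
  shows "(\<Lambda> + 1) / 2 * (act (\<Lambda> / (\<Lambda> + 1) * B + ((-1/2 - \<Lambda>/2) / (\<Lambda> + 1) + 1))
      - act (\<Lambda> / (\<Lambda> + 1) * B + ((1/2 - \<Lambda>/2) / (\<Lambda> + 1) + 1)))
    = (if 1/2 < B then 1/2 else -1/2)" (is "?lhs = _")
proof -
  define z where "z = \<Lambda> * (B - 1/2) + 1/2"
  have \<Lambda>: "0 < \<Lambda>" "\<Lambda> * \<eta> = 1/2"
    unfolding \<Lambda>_def using assms(1) by auto
  have "0 \<le> \<Lambda> * B" "\<Lambda> * B \<le> \<Lambda>"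
    using assms(2,3) \<Lambda> by (simp_all add: mult_left_le)
  then have z: "\<bar>z\<bar> \<le> \<Lambda> + 1" "\<bar>z - 1\<bar> \<le> \<Lambda> + 1"
    unfolding z_def by (auto simp: abs_le_iff algebra_simps)
  have arg: "\<Lambda> / (\<Lambda> + 1) * B + ((1/2 - \<Lambda>/2) / (\<Lambda> + 1) + 1) = z / (\<Lambda> + 1) + 1"
    "\<Lambda> / (\<Lambda> + 1) * B + ((-1/2 - \<Lambda>/2) / (\<Lambda> + 1) + 1) = (z - 1) / (\<Lambda> + 1) + 1"
    unfolding z_def by (simp_all add: add_divide_distrib diff_divide_distrib algebra_simps)
  have tent: "act (z / (\<Lambda> + 1) + 1) = 1 - \<bar>z\<bar> / (\<Lambda> + 1)"
    "act ((z - 1) / (\<Lambda> + 1) + 1) = 1 - \<bar>z - 1\<bar> / (\<Lambda> + 1)"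
    using z \<Lambda> by (subst act_tent; auto simp: abs_le_iff field_simps)+
  have "?lhs = (\<Lambda> + 1) / 2 * ((1 - \<bar>z - 1\<bar> / (\<Lambda> + 1)) - (1 - \<bar>z\<bar> / (\<Lambda> + 1)))"
    by (simp only: arg tent)
  also have "\<dots> = (\<bar>z\<bar> - \<bar>z - 1\<bar>) / 2"
    using \<Lambda> by (simp add: divide_simps)
  finally have "?lhs = (\<bar>z\<bar> - \<bar>z - 1\<bar>) / 2" .
  moreover have "1 \<le> z" if "1/2 + \<eta> \<le> B"
    using mult_left_mono[OF that, of \<Lambda>] \<Lambda> unfolding z_def by (simp add: algebra_simps)
  moreover have "z \<le> 0" if "B \<le> 1/2 - \<eta>"
    using mult_left_mono[OF that, of \<Lambda>] \<Lambda> unfolding z_def by (simp add: algebra_simps)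
  ultimately show ?thesis
    using assms(1,4) by auto
qed

lemma act_frac_gadget:
  assumes "0 \<le> s" "0 < \<eta>" "\<eta> \<le> frac s" "frac s \<le> 1 - \<eta>"
  defines "\<Lambda> \<equiv> 1 / (2 * \<eta>)"
  shows "act (- act s - (\<Lambda> + 1) / 2 * act (\<Lambda> / (\<Lambda> + 1) * act (s + 1/2) + ((1/2 - \<Lambda>/2) / (\<Lambda> + 1) + 1))
      + (\<Lambda> + 1) / 2 * act (\<Lambda> / (\<Lambda> + 1) * act (s + 1/2) + ((-1/2 - \<Lambda>/2) / (\<Lambda> + 1) + 1)) + 3/2)
    = frac s"
    (is "act ?arg = _")
proof -
  have f: "0 \<le> frac s" "frac s < 1"
    by (auto simp: frac_lt_1)
  have B: "0 \<le> act (s + 1/2)" "act (s + 1/2) \<le> 1"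
    "act (s + 1/2) \<le> 1/2 - \<eta> \<or> 1/2 + \<eta> \<le> act (s + 1/2)"
    using act_parity[OF assms(1-4)] assms(2) by auto
  let ?E1 = "act (\<Lambda> / (\<Lambda> + 1) * act (s + 1/2) + ((1/2 - \<Lambda>/2) / (\<Lambda> + 1) + 1))"
  let ?E2 = "act (\<Lambda> / (\<Lambda> + 1) * act (s + 1/2) + ((-1/2 - \<Lambda>/2) / (\<Lambda> + 1) + 1))"
  have "?arg = - act s + (\<Lambda> + 1) / 2 * (?E2 - ?E1) + 3/2"
    by (simp add: algebra_simps)
  also have "\<dots> = - act s + (if 1/2 < act (s + 1/2) then 1/2 else -1/2) + 3/2"
    unfolding \<Lambda>_def act_step_detector[OF assms(2) B] ..
  finally have "act ?arg = act (- act s + (if 1/2 < act (s + 1/2) then 1/2 else -1/2) + 3/2)"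
    by (rule arg_cong)
  then show ?thesis
    using act_parity[OF assms(1-4)] assms(2) f act_tent[of "1 - frac s"] act_eq_self[of "frac s"]
    by auto
qed

lemma sum_lessThan_mult_blocks:
  fixes n d :: nat
  shows "(\<Sum>j<n * d. g j) = (\<Sum>q<d. \<Sum>r<n. g (n * q + r))"
proof (induction d)
  case (Suc d)
  have split: "{..<n * Suc d} = {..<n * d} \<union> (\<lambda>r. n * d + r) ` {..<n}"
  proof (intro set_eqI iffI)
    fix x
    assume "x \<in> {..<n * Suc d}"
    then show "x \<in> {..<n * d} \<union> (\<lambda>r. n * d + r) ` {..<n}"
      by (cases "x < n * d") (auto intro: image_eqI[of _ _ "x - n * d"])
  qed auto
  have "(\<Sum>j<n * Suc d. g j) = (\<Sum>j<n * d. g j) + (\<Sum>j\<in>(\<lambda>r. n * d + r) ` {..<n}. g j)"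
    unfolding split by (subst sum.union_disjoint) auto
  then show ?case
    using Suc by (simp add: sum.reindex)
qed simp

definition block_diag :: "nat \<Rightarrow> nat \<Rightarrow> (nat \<Rightarrow> nat \<Rightarrow> real) \<Rightarrow> nat \<Rightarrow> nat \<Rightarrow> real" where
  "block_diag n d B i j = (if i < n * d \<and> j < n * d \<and> i div n = j div n then B (i mod n) (j mod n) else 0)"

lemma act_layer_block_diag:
  assumes "n * d \<le> N" "q < d" "r < n"
  shows "act_layer N (block_diag n d B) (\<lambda>i. c (i mod n)) h (n * q + r)
    = act ((\<Sum>r'<n. B r r' * h (n * q + r')) + c r)"
proof -
  have block: "n * q + r' < n * d" if "r' < n" for r'
  proof -
    have "n * q + r' < n * Suc q"
      using that by simp
    also have "\<dots> \<le> n * d"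
      using assms(2) by (intro mult_le_mono2) simp
    finally show ?thesis .
  qed
  have i: "(n * q + r) div n = q" "(n * q + r) mod n = r"
    using assms(3) by simp_all
  have "(\<Sum>j<N. block_diag n d B (n * q + r) j * h j) = (\<Sum>j<n * d. block_diag n d B (n * q + r) j * h j)"
    using assms(1) by (intro sum.mono_neutral_right) (auto simp: block_diag_def)
  also have "\<dots> = (\<Sum>q'<d. if q' = q then \<Sum>r'<n. B r r' * h (n * q + r') else 0)"
    unfolding sum_lessThan_mult_blocks using i block assms(3)
    by (intro sum.cong refl) (auto simp: block_diag_def intro!: sum.cong)
  also have "\<dots> = (\<Sum>r'<n. B r r' * h (n * q + r'))"
    using assms(2) by simp
  finally have "(\<Sum>j<N. block_diag n d B (n * q + r) j * h j) = (\<Sum>r'<n. B r r' * h (n * q + r'))" .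
  then show ?thesis
    unfolding act_layer_def i(2) by simp
qed

lemma sum_lessThan_4: "(\<Sum>r<4. g r) = g 0 + g 1 + g 2 + (g (3::nat) :: real)"
  by (simp add: numeral_eq_Suc)

definition scaled_coord :: "real \<Rightarrow> real \<Rightarrow> nat \<Rightarrow> real^'n \<Rightarrow> 'n \<Rightarrow> real" where
  "scaled_coord a b K x k = real K * (x $ k - a) / (b - a)"

definition away_from_grid :: "real \<Rightarrow> real \<Rightarrow> nat \<Rightarrow> real \<Rightarrow> real^'n \<Rightarrow> bool" where
  "away_from_grid a b K \<eta> x \<longleftrightarrow>
     (\<forall>k. \<eta> \<le> frac (scaled_coord a b K x k) \<and> frac (scaled_coord a b K x k) \<le> 1 - \<eta>)"

text \<open>The cell of \<open>x\<close>, encoded in base \<open>K\<close> with \<open>\<iota>\<close> enumerating the coordinates.\<close>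
definition cell_code :: "real \<Rightarrow> real \<Rightarrow> nat \<Rightarrow> ('n \<Rightarrow> nat) \<Rightarrow> real^'n \<Rightarrow> nat" where
  "cell_code a b K \<iota> x = (\<Sum>k\<in>UNIV. nat \<lfloor>scaled_coord a b K x k\<rfloor> * K ^ \<iota> k)"

definition cell_corner :: "real \<Rightarrow> real \<Rightarrow> nat \<Rightarrow> ('n \<Rightarrow> nat) \<Rightarrow> nat \<Rightarrow> real^'n" where
  "cell_corner a b K \<iota> m = (\<chi> k. a + (b - a) / real K * real (m div K ^ \<iota> k mod K))"

lemma scaled_coord_bounds:
  assumes "x \<in> cube a b" "a < b"
  shows "0 \<le> scaled_coord a b K x k" "scaled_coord a b K x k \<le> real K"
proof -
  define t where "t = (x $ k - a) / (b - a)"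
  have "0 \<le> t" "t \<le> 1"
    unfolding t_def using assms by (auto simp: cube_def mem_box_cart)
  moreover have "scaled_coord a b K x k = real K * t"
    by (simp add: scaled_coord_def t_def)
  ultimately show "0 \<le> scaled_coord a b K x k" "scaled_coord a b K x k \<le> real K"
    by (simp_all add: mult_left_le)
qed

lemma floor_scaled_coord_bounds:
  assumes "x \<in> cube a b" "a < b" "away_from_grid a b K \<eta> x" "0 < \<eta>"
  shows "0 \<le> \<lfloor>scaled_coord a b K x k\<rfloor>" "\<lfloor>scaled_coord a b K x k\<rfloor> < int K"
proof -
  have "frac (scaled_coord a b K x k) \<noteq> 0"
    using assms(3,4) unfolding away_from_grid_def by (metis not_le)
  then have "scaled_coord a b K x k \<noteq> real K"
    by auto
  then show "0 \<le> \<lfloor>scaled_coord a b K x k\<rfloor>" "\<lfloor>scaled_coord a b K x k\<rfloor> < int K"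
    using scaled_coord_bounds[OF assms(1,2), of K k] by (auto simp: floor_less_iff)
qed

lemma real_cell_code:
  assumes "\<And>k. 0 \<le> \<lfloor>scaled_coord a b K x k\<rfloor>"
  shows "real (cell_code a b K \<iota> x) = (\<Sum>k\<in>UNIV. real K ^ \<iota> k * of_int \<lfloor>scaled_coord a b K x k\<rfloor>)"
  unfolding cell_code_def of_nat_sum using assms by (intro sum.cong) (simp_all add: mult.commute)

lemma cell_code_digits:
  fixes \<iota> :: "'n::finite \<Rightarrow> nat"
  assumes \<iota>: "bij_betw \<iota> UNIV {..<CARD('n)}"
    and "x \<in> cube a b" "a < b" "away_from_grid a b K \<eta> x" "0 < \<eta>"
  shows "cell_code a b K \<iota> x < K ^ CARD('n)"
    "cell_code a b K \<iota> x div K ^ \<iota> k mod K = nat \<lfloor>scaled_coord a b K x k\<rfloor>"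
proof -
  define digit where "digit q = nat \<lfloor>scaled_coord a b K x (inv_into UNIV \<iota> q)\<rfloor>" for q
  have digit: "digit q < K" for q
    unfolding digit_def using floor_scaled_coord_bounds[OF assms(2-5)] by (simp add: nat_less_iff)
  have "cell_code a b K \<iota> x = (\<Sum>k\<in>UNIV. digit (\<iota> k) * K ^ \<iota> k)"
    unfolding cell_code_def digit_def using bij_betw_inv_into_left[OF \<iota>] by simp
  also have "\<dots> = (\<Sum>q<CARD('n). digit q * K ^ q)"
    using \<iota> by (rule sum.reindex_bij_betw)
  finally have code: "cell_code a b K \<iota> x = (\<Sum>q<CARD('n). digit q * K ^ q)" .
  show "cell_code a b K \<iota> x < K ^ CARD('n)"
    unfolding code using digit by (rule mixed_radix_less)
  have "\<iota> k < CARD('n)"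
    using \<iota> by (auto simp: bij_betw_def)
  then show "cell_code a b K \<iota> x div K ^ \<iota> k mod K = nat \<lfloor>scaled_coord a b K x k\<rfloor>"
    unfolding code using mixed_radix_digit[of _ digit K] digit bij_betw_inv_into_left[OF \<iota>]
    by (simp add: digit_def)
qed

lemma dist_cell_corner:
  fixes \<iota> :: "'n::finite \<Rightarrow> nat"
  assumes \<iota>: "bij_betw \<iota> UNIV {..<CARD('n)}"
    and x: "x \<in> cube a b" "a < b" "away_from_grid a b K \<eta> x" "0 < \<eta>"
  shows "dist x (cell_corner a b K \<iota> (cell_code a b K \<iota> x)) \<le> real CARD('n) * (b - a) / real K"
proof -
  let ?y = "cell_corner a b K \<iota> (cell_code a b K \<iota> x)"
  have "0 < int K"
    using floor_scaled_coord_bounds[OF x, of undefined] by linarith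
  then have K: "0 < K"
    by simp
  have comp: "\<bar>(x - ?y) $ k\<bar> \<le> (b - a) / K" for k
  proof -
    let ?s = "scaled_coord a b K x k"
    define f where "f = ?s - of_int \<lfloor>?s\<rfloor>"
    have f: "0 \<le> f" "f \<le> 1"
      unfolding f_def by linarith+
    have "(x - ?y) $ k = (b - a) * f / K"
      using cell_code_digits(2)[OF assms, of k] floor_scaled_coord_bounds[OF x, of k] K x(2)
      by (simp add: cell_corner_def scaled_coord_def f_def field_simps)
    moreover have "(b - a) * f / K \<le> (b - a) / K"
      using f x(2) by (intro divide_right_mono mult_left_le) auto
    ultimately show ?thesis
      using f x(2) by simp
  qed
  have "dist x ?y \<le> (\<Sum>k\<in>UNIV. \<bar>(x - ?y) $ k\<bar>)"
    unfolding dist_norm by (rule norm_le_l1_cart)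
  also have "\<dots> \<le> of_nat CARD('n) * ((b - a) / K)"
    using comp by (rule sum_bounded_above)
  finally show ?thesis
    by simp
qed

text \<open>Unit \<open>4 \<iota> k + r\<close> of each hidden layer belongs to coordinate \<open>k\<close>.\<close>
lemma grid_input_layer:
  fixes \<iota> :: "'n::finite \<Rightarrow> nat"
  assumes \<iota>: "inj \<iota>" and ab: "a < b" and K: "1 \<le> K"
  obtains F where "F \<in> hidden_features N 1"
    "\<And>x k. x \<in> cube a b \<Longrightarrow> F x (4 * \<iota> k) = act (scaled_coord a b K x k) \<and>
       F x (4 * \<iota> k + 1) = act (scaled_coord a b K x k + 1/2) \<and> F x (4 * \<iota> k + 2) = scaled_coord a b K x k / K"
proof -
  define slope :: "real list" where "slope = [real K, real K, 1, 0]"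
  define offset :: "real list" where "offset = [0, 1/2, 0, 0]"
  define \<alpha> where "\<alpha> r = slope ! r / (b - a)" for r
  define \<beta> where "\<beta> r = offset ! r - \<alpha> r * a" for r
  define F where "F x i = act ((\<Sum>k\<in>UNIV. (if i div 4 = \<iota> k then \<alpha> (i mod 4) else 0) * x $ k) + \<beta> (i mod 4))"
    for x :: "real^'n" and i
  have "F \<in> hidden_features N 1"
    unfolding F_def[abs_def] by (rule input_layer_in_hidden_features)
  moreover have "F x (4 * \<iota> k) = act (scaled_coord a b K x k) \<and>
      F x (4 * \<iota> k + 1) = act (scaled_coord a b K x k + 1/2) \<and> F x (4 * \<iota> k + 2) = scaled_coord a b K x k / K"
    if x: "x \<in> cube a b" for x k
  proof -
    let ?s = "scaled_coord a b K x k"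
    have "(\<Sum>k'\<in>UNIV. (if (4 * \<iota> k + r) div 4 = \<iota> k' then \<alpha> ((4 * \<iota> k + r) mod 4) else 0) * x $ k')
        = \<alpha> r * x $ k" if "r < 4" for r
      using that \<iota> by (simp add: inj_eq if_distrib[of "\<lambda>z. z * _"] cong: if_cong)
    moreover have "\<alpha> r * x $ k + \<beta> r = slope ! r * (x $ k - a) / (b - a) + offset ! r" for r
      by (simp add: \<alpha>_def \<beta>_def diff_divide_distrib right_diff_distrib)
    ultimately have F: "F x (4 * \<iota> k + r) = act (slope ! r * (x $ k - a) / (b - a) + offset ! r)" if "r < 4" for r
      unfolding F_def using that by simp
    have "0 \<le> ?s / K" "?s / K \<le> 1"
      using scaled_coord_bounds[OF x ab] K by (simp_all add: divide_le_eq_1)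
    then have "act (?s / K) = ?s / K"
      by (rule act_eq_self)
    then show ?thesis
      using F[of 0] F[of 1] F[of 2] K by (simp add: slope_def offset_def scaled_coord_def)
  qed
  ultimately show thesis
    by (rule that)
qed

lemma frac_block_layers:
  fixes \<iota> :: "'n::finite \<Rightarrow> nat" and s :: "real^'n \<Rightarrow> 'n \<Rightarrow> real" and K :: nat
  assumes \<iota>: "bij_betw \<iota> UNIV {..<CARD('n)}" and N: "4 * CARD('n) \<le> N"
    and F: "F \<in> hidden_features N L" "1 \<le> L" and \<eta>: "0 < \<eta>" and K: "1 \<le> K"
    and s: "\<And>x k. x \<in> S \<Longrightarrow> 0 \<le> s x k \<and> s x k \<le> K \<and> \<eta> \<le> frac (s x k) \<and> frac (s x k) \<le> 1 - \<eta>"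
    and F_vals: "\<And>x k. x \<in> S \<Longrightarrow> F x (4 * \<iota> k) = act (s x k) \<and>
       F x (4 * \<iota> k + 1) = act (s x k + 1/2) \<and> F x (4 * \<iota> k + 2) = s x k / K"
  obtains G where "G \<in> hidden_features N (L + 2)"
    "\<And>x k. x \<in> S \<Longrightarrow> G x (4 * \<iota> k) = frac (s x k) \<and> G x (4 * \<iota> k + 1) = s x k / K"
proof -
  define \<Lambda> where "\<Lambda> = 1 / (2 * \<eta>)"
  define B2 where "B2 r r' = [[1, 0, 0, 0], [0, \<Lambda> / (\<Lambda> + 1), 0, 0], [0, 0, 1, 0], [0, \<Lambda> / (\<Lambda> + 1), 0, 0]] ! r ! r'"
    for r r'
  define c2 where "c2 r = [0, (1/2 - \<Lambda>/2) / (\<Lambda> + 1) + 1, 0, (-1/2 - \<Lambda>/2) / (\<Lambda> + 1) + 1] ! r" for r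
  define B3 where "B3 r r' = [[-1, - (\<Lambda> + 1) / 2, 0, (\<Lambda> + 1) / 2], [0, 0, 1, 0], [0, 0, 0, 0], [0, 0, 0, 0]] ! r ! r'"
    for r r'
  define c3 where "c3 r = [3/2, 0, 0, 0 :: real] ! r" for r
  define F2 where "F2 x = act_layer N (block_diag 4 CARD('n) B2) (\<lambda>i. c2 (i mod 4)) (F x)" for x
  define F3 where "F3 x = act_layer N (block_diag 4 CARD('n) B3) (\<lambda>i. c3 (i mod 4)) (F2 x)" for x
  have "F3 \<in> hidden_features N (Suc (Suc L))"
    unfolding F3_def[abs_def] F2_def[abs_def] using F by (auto intro!: act_layer_in_hidden_features)
  moreover have "F3 x (4 * \<iota> k) = frac (s x k) \<and> F3 x (4 * \<iota> k + 1) = s x k / K" if x: "x \<in> S" for x k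
  proof -
    have block: "\<iota> k < CARD('n)"
      using \<iota> by (auto simp: bij_betw_def)
    have "0 \<le> s x k / K" "s x k / K \<le> 1"
      using s[OF x, of k] K by (simp_all add: divide_le_eq_1)
    then have act_s: "act (act (s x k)) = act (s x k)" "act (s x k / K) = s x k / K"
      using s[OF x, of k] sigma1_nonneg sigma1_le_one by (simp_all add: act_nonneg sigma1_eq_self)
    define E1 where "E1 = act (\<Lambda> / (\<Lambda> + 1) * act (s x k + 1/2) + ((1/2 - \<Lambda>/2) / (\<Lambda> + 1) + 1))"
    define E2 where "E2 = act (\<Lambda> / (\<Lambda> + 1) * act (s x k + 1/2) + ((-1/2 - \<Lambda>/2) / (\<Lambda> + 1) + 1))"
    have F2: "F2 x (4 * \<iota> k + r) = act ((\<Sum>r'<4. B2 r r' * F x (4 * \<iota> k + r')) + c2 r)" if "r < 4" for r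
      unfolding F2_def using act_layer_block_diag[OF N block that] .
    have F2_vals: "F2 x (4 * \<iota> k) = act (s x k)" "F2 x (4 * \<iota> k + 1) = E1"
        "F2 x (4 * \<iota> k + 2) = s x k / K" "F2 x (4 * \<iota> k + 3) = E2"
      using F2[of 0] F2[of 1] F2[of 2] F2[of 3] F_vals[OF x, of k] act_s unfolding E1_def E2_def
      by (simp_all add: sum_lessThan_4 B2_def c2_def)
    have F3: "F3 x (4 * \<iota> k + r) = act ((\<Sum>r'<4. B3 r r' * F2 x (4 * \<iota> k + r')) + c3 r)" if "r < 4" for r
      unfolding F3_def using act_layer_block_diag[OF N block that] .
    have "F3 x (4 * \<iota> k) = act (- act (s x k) - (\<Lambda> + 1) / 2 * E1 + (\<Lambda> + 1) / 2 * E2 + 3/2)"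
      using F3[of 0] F2_vals
      by (simp add: sum_lessThan_4 B3_def c3_def) (rule arg_cong[of _ _ act], simp add: field_simps)
    also have "\<dots> = frac (s x k)"
      unfolding E1_def E2_def \<Lambda>_def using s[OF x, of k] \<eta> by (intro act_frac_gadget) auto
    finally show ?thesis
      using F3[of 1] F2_vals act_s by (simp add: sum_lessThan_4 B3_def c3_def)
  qed
  ultimately show thesis
    by (intro that) simp_all
qed

lemma grid_frac_features:
  fixes \<iota> :: "'n::finite \<Rightarrow> nat"
  assumes \<iota>: "bij_betw \<iota> UNIV {..<CARD('n)}" and N: "4 * CARD('n) \<le> N"
    and ab: "a < b" and K: "1 \<le> K" and \<eta>: "0 < \<eta>"
  obtains F where "F \<in> hidden_features N 3"
    "\<And>x k. x \<in> cube a b \<Longrightarrow> away_from_grid a b K \<eta> x \<Longrightarrow>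
       F x (4 * \<iota> k) = frac (scaled_coord a b K x k) \<and> F x (4 * \<iota> k + 1) = scaled_coord a b K x k / K"
proof -
  obtain F where F: "F \<in> hidden_features N 1"
    and F_vals: "\<And>x k. x \<in> cube a b \<Longrightarrow> F x (4 * \<iota> k) = act (scaled_coord a b K x k) \<and>
       F x (4 * \<iota> k + 1) = act (scaled_coord a b K x k + 1/2) \<and> F x (4 * \<iota> k + 2) = scaled_coord a b K x k / K"
    using grid_input_layer[OF bij_betw_imp_inj_on[OF \<iota>] ab K] by blast
  let ?S = "{x \<in> cube a b. away_from_grid a b K \<eta> x}"
  have "0 \<le> scaled_coord a b K x k \<and> scaled_coord a b K x k \<le> K \<and>
      \<eta> \<le> frac (scaled_coord a b K x k) \<and> frac (scaled_coord a b K x k) \<le> 1 - \<eta>" if "x \<in> ?S" for x k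
    using that scaled_coord_bounds[OF _ ab] unfolding away_from_grid_def by auto
  then obtain G where "G \<in> hidden_features N (1 + 2)"
    "\<And>x k. x \<in> ?S \<Longrightarrow> G x (4 * \<iota> k) = frac (scaled_coord a b K x k) \<and> G x (4 * \<iota> k + 1) = scaled_coord a b K x k / K"
    using frac_block_layers[OF \<iota> N F order_refl \<eta> K, of ?S "scaled_coord a b K"] F_vals by blast
  then show thesis
    by (intro that[of G]) (auto simp: numeral_3_eq_3)
qed

text \<open>A row computing \<open>-\<Sum>q. K\<^sup>q \<lfloor>s\<^sub>q\<rfloor>\<close> via \<open>\<lfloor>s\<rfloor> = K (s / K) - frac s\<close>, where
  units \<open>4 q\<close> and \<open>4 q + 1\<close> hold \<open>frac s\<^sub>q\<close> and \<open>s\<^sub>q / K\<close>.\<close>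
definition digit_sum_weights :: "nat \<Rightarrow> nat \<Rightarrow> nat \<Rightarrow> real" where
  "digit_sum_weights K d j = (if j < 4 * d then [1, - real K, 0, 0] ! (j mod 4) * real K ^ (j div 4) else 0)"

lemma sum_digit_sum_weights:
  fixes \<iota> :: "'n::finite \<Rightarrow> nat"
  assumes \<iota>: "bij_betw \<iota> UNIV {..<CARD('n)}" and N: "4 * CARD('n) \<le> N" and K: "1 \<le> K"
    and x: "x \<in> cube a b" "a < b" "away_from_grid a b K \<eta> x" "0 < \<eta>"
    and h: "\<And>k. h (4 * \<iota> k) = frac (scaled_coord a b K x k) \<and> h (4 * \<iota> k + 1) = scaled_coord a b K x k / K"
  shows "(\<Sum>j<N. digit_sum_weights K CARD('n) j * h j) = - real (cell_code a b K \<iota> x)"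
proof -
  let ?s = "scaled_coord a b K x"
  have "(\<Sum>j<N. digit_sum_weights K CARD('n) j * h j) = (\<Sum>j<4 * CARD('n). digit_sum_weights K CARD('n) j * h j)"
    using N by (intro sum.mono_neutral_right) (auto simp: digit_sum_weights_def)
  also have "\<dots> = (\<Sum>q<CARD('n). real K ^ q * (h (4 * q) - real K * h (4 * q + 1)))"
    unfolding sum_lessThan_mult_blocks
    by (intro sum.cong refl) (auto simp: digit_sum_weights_def sum_lessThan_4 algebra_simps)
  also have "\<dots> = (\<Sum>k\<in>UNIV. real K ^ \<iota> k * (h (4 * \<iota> k) - real K * h (4 * \<iota> k + 1)))"
    using sum.reindex_bij_betw[OF \<iota>, of "\<lambda>q. real K ^ q * (h (4 * q) - real K * h (4 * q + 1))"] by simp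
  also have "\<dots> = (\<Sum>k\<in>UNIV. - (real K ^ \<iota> k * of_int \<lfloor>?s k\<rfloor>))"
  proof (intro sum.cong refl)
    fix k
    show "real K ^ \<iota> k * (h (4 * \<iota> k) - real K * h (4 * \<iota> k + 1)) = - (real K ^ \<iota> k * of_int \<lfloor>?s k\<rfloor>)"
      unfolding h[of k, THEN conjunct1] h[of k, THEN conjunct2] using K by (simp add: frac_def algebra_simps)
  qed
  also have "\<dots> = - real (cell_code a b K \<iota> x)"
    using real_cell_code[of a b K x \<iota>, OF floor_scaled_coord_bounds(1)[OF x]] by (simp add: sum_negf)
  finally show ?thesis .
qed

text \<open>The negative branch \<^const>\<open>sigma2\<close> of the activation turns the code \<open>m\<close> into \<open>-(m + c) / (m + c + 1)\<close>.\<close>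
lemma grid_code_feature:
  fixes \<iota> :: "'n::finite \<Rightarrow> nat"
  assumes \<iota>: "bij_betw \<iota> UNIV {..<CARD('n)}" and N: "4 * CARD('n) \<le> N"
    and ab: "a < b" and K: "1 \<le> K" and \<eta>: "0 < \<eta>" and c: "0 < c"
  obtains F where "F \<in> hidden_features N 4"
    "\<And>x. x \<in> cube a b \<Longrightarrow> away_from_grid a b K \<eta> x \<Longrightarrow>
       F x 0 + 1 = 1 / (real (cell_code a b K \<iota> x) + c + 1)"
proof -
  obtain F where F: "F \<in> hidden_features N 3"
    and F_vals: "\<And>x k. x \<in> cube a b \<Longrightarrow> away_from_grid a b K \<eta> x \<Longrightarrow>
       F x (4 * \<iota> k) = frac (scaled_coord a b K x k) \<and> F x (4 * \<iota> k + 1) = scaled_coord a b K x k / K"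
    using grid_frac_features[OF \<iota> N ab K \<eta>] by blast
  define G where "G x = act_layer N (\<lambda>i. digit_sum_weights K CARD('n)) (\<lambda>i. - c) (F x)" for x
  have "G \<in> hidden_features N (Suc 3)"
    unfolding G_def[abs_def] using F by (rule act_layer_in_hidden_features) simp
  moreover have "G x 0 + 1 = 1 / (real (cell_code a b K \<iota> x) + c + 1)"
    if x: "x \<in> cube a b" "away_from_grid a b K \<eta> x" for x
  proof -
    have "G x 0 = act (- (real (cell_code a b K \<iota> x) + c))"
      unfolding G_def act_layer_def using sum_digit_sum_weights[OF \<iota> N K x(1) ab x(2) \<eta> F_vals[OF x]] by simp
    moreover have "act (- (real (cell_code a b K \<iota> x) + c))
        = - (real (cell_code a b K \<iota> x) + c) / (real (cell_code a b K \<iota> x) + c + 1)"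
      using c by (intro act_neg) simp
    ultimately show ?thesis
      using c by (simp add: field_simps)
  qed
  ultimately show thesis
    using that by simp
qed

lemma grid_network:
  fixes \<iota> :: "'n::finite \<Rightarrow> nat"
  assumes \<iota>: "bij_betw \<iota> UNIV {..<CARD('n)}" and N: "4 * CARD('n) \<le> N" and L: "5 \<le> L"
    and ab: "a < b" and K: "1 \<le> K" and \<eta>: "0 < \<eta>" and c: "0 < c"
  obtains \<phi> where "\<phi> \<in> NN_class N L" "\<And>x. \<bar>\<phi> x - e\<bar> \<le> \<bar>v\<bar>"
    "\<And>x. x \<in> cube a b \<Longrightarrow> away_from_grid a b K \<eta> x \<Longrightarrow>
       \<phi> x = v * sigma1 (t / (real (cell_code a b K \<iota> x) + c + 1)) + e"
proof -
  have N0: "0 < N"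
    using N by (metis gr0I mult_is_0 le_0_eq zero_less_card_finite zero_neq_numeral)
  obtain F where F: "F \<in> hidden_features N 4"
    and F_val: "\<And>x. x \<in> cube a b \<Longrightarrow> away_from_grid a b K \<eta> x \<Longrightarrow>
       F x 0 + 1 = 1 / (real (cell_code a b K \<iota> x) + c + 1)"
    using grid_code_feature[OF \<iota> N ab K \<eta> c] by blast
  obtain G where G: "G \<in> hidden_features N 5" and G_val: "\<And>x. G x 0 = sigma1 (t * (F x 0 + 1))"
    using triangle_wave_layer[OF F _ N0, of t] by auto
  obtain H where H: "H \<in> hidden_features N (5 + (L - 5))" and H_val: "\<And>x. H x 0 = G x 0"
    using identity_layers[OF G _ N0, of "L - 5"] G_val sigma1_nonneg by auto
  show thesis
  proof
    show "(\<lambda>x. v * H x 0 + e) \<in> NN_class N L"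
      using unit_readout_in_NN_class[OF H N0] L by simp
    show "\<bar>v * H x 0 + e - e\<bar> \<le> \<bar>v\<bar>" for x
      using abs_hidden_feature_le_one[OF H, of x 0] by (simp add: abs_mult mult_left_le)
    show "v * H x 0 + e = v * sigma1 (t / (real (cell_code a b K \<iota> x) + c + 1)) + e"
      if "x \<in> cube a b" "away_from_grid a b K \<eta> x" for x
      using F_val[OF that] by (simp add: H_val G_val)
  qed
qed

section \<open>Closeness in the \<open>p\<close>-th power mean\<close>

text \<open>Closeness is measured by \<open>\<integral> \<bar>f - g\<bar>\<^sup>p\<close> rather than by the \<open>L\<^sup>p\<close> norm, so that
  the quasi triangle inequality below holds for every \<open>p > 0\<close>.\<close>
definition Lp_close :: "'a measure \<Rightarrow> real \<Rightarrow> real \<Rightarrow> ('a \<Rightarrow> real) \<Rightarrow> ('a \<Rightarrow> real) \<Rightarrow> bool" where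
  "Lp_close M p \<epsilon> f g \<longleftrightarrow>
     integrable M (\<lambda>x. \<bar>f x - g x\<bar> powr p) \<and> (\<integral>x. \<bar>f x - g x\<bar> powr p \<partial>M) < \<epsilon>"

lemma Lp_close_commute: "Lp_close M p \<epsilon> f g \<longleftrightarrow> Lp_close M p \<epsilon> g f"
  by (simp add: Lp_close_def abs_minus_commute)

lemma abs_add_powr_le:
  fixes u v p :: real
  assumes "0 < p"
  shows "\<bar>u + v\<bar> powr p \<le> 2 powr p * (\<bar>u\<bar> powr p + \<bar>v\<bar> powr p)"
proof -
  define m where "m = max \<bar>u\<bar> \<bar>v\<bar>"
  have "\<bar>u + v\<bar> powr p \<le> (2 * m) powr p"
    unfolding m_def using assms by (intro powr_mono2) auto
  also have "\<dots> = 2 powr p * m powr p"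
    unfolding m_def by (simp add: powr_mult)
  also have "m powr p \<le> \<bar>u\<bar> powr p + \<bar>v\<bar> powr p"
    unfolding m_def by (auto simp: max_def)
  finally show ?thesis
    by simp
qed

lemma Lp_close_trans:
  assumes p: "0 < p" and meas: "f \<in> borel_measurable M" "g \<in> borel_measurable M" "h \<in> borel_measurable M"
    and fg: "Lp_close M p \<epsilon> f g" and gh: "Lp_close M p \<delta> g h"
  shows "Lp_close M p (2 powr p * (\<epsilon> + \<delta>)) f h"
proof -
  let ?fg = "\<lambda>x. \<bar>f x - g x\<bar> powr p" and ?gh = "\<lambda>x. \<bar>g x - h x\<bar> powr p"
  have bound: "\<bar>f x - h x\<bar> powr p \<le> 2 powr p * (?fg x + ?gh x)" for x
    using abs_add_powr_le[OF p, of "f x - g x" "g x - h x"] by simp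
  have int_bound: "integrable M (\<lambda>x. 2 powr p * (?fg x + ?gh x))"
    using fg gh unfolding Lp_close_def by simp
  have "(\<lambda>x. \<bar>f x - h x\<bar> powr p) \<in> borel_measurable M"
    using meas by measurable
  moreover have "norm (\<bar>f x - h x\<bar> powr p) \<le> norm (2 powr p * (?fg x + ?gh x))" for x
    using bound[of x] by simp
  ultimately have int: "integrable M (\<lambda>x. \<bar>f x - h x\<bar> powr p)"
    using Bochner_Integration.integrable_bound[OF int_bound] by blast
  have "(\<integral>x. \<bar>f x - h x\<bar> powr p \<partial>M) \<le> (\<integral>x. 2 powr p * (?fg x + ?gh x) \<partial>M)"
    using int int_bound bound by (rule integral_mono)
  also have "\<dots> = 2 powr p * ((\<integral>x. ?fg x \<partial>M) + (\<integral>x. ?gh x \<partial>M))"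
    using fg gh unfolding Lp_close_def by simp
  also have "\<dots> < 2 powr p * (\<epsilon> + \<delta>)"
    using fg gh unfolding Lp_close_def by simp
  finally show ?thesis
    unfolding Lp_close_def using int by simp
qed

lemma Lp_close_exceptional_set:
  assumes M: "finite_measure M" and p: "0 < p"
    and meas: "f \<in> borel_measurable M" "g \<in> borel_measurable M" and E: "E \<in> sets M"
    and C: "\<And>x. x \<in> space M \<Longrightarrow> \<bar>f x - g x\<bar> \<le> C"
    and \<delta>: "\<And>x. x \<in> space M - E \<Longrightarrow> \<bar>f x - g x\<bar> \<le> \<delta>" "0 \<le> \<delta>"
    and small: "\<delta> powr p * measure M (space M) + C powr p * measure M E < \<epsilon>"
  shows "Lp_close M p \<epsilon> f g"
proof -
  interpret finite_measure M
    by (rule M)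
  let ?bound = "\<lambda>x. \<delta> powr p + C powr p * indicator E x"
  have bound: "\<bar>f x - g x\<bar> powr p \<le> ?bound x" if "x \<in> space M" for x
  proof (cases "x \<in> E")
    case True
    then show ?thesis
      using C[OF that] p powr_mono2[of p "\<bar>f x - g x\<bar>" C] by (simp add: add_increasing)
  next
    case False
    then show ?thesis
      using \<delta> that p by (simp add: powr_mono2)
  qed
  have int_bound: "integrable M ?bound"
    using E by (intro Bochner_Integration.integrable_add integrable_mult_right integrable_real_indicator)
      (auto simp: emeasure_eq_measure)
  have "(\<lambda>x. \<bar>f x - g x\<bar> powr p) \<in> borel_measurable M"
    using meas by measurable
  moreover have "AE x in M. norm (\<bar>f x - g x\<bar> powr p) \<le> norm (?bound x)"
    using bound by (intro AE_I2) (simp add: add_increasing)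
  ultimately have int: "integrable M (\<lambda>x. \<bar>f x - g x\<bar> powr p)"
    by (rule Bochner_Integration.integrable_bound[OF int_bound])
  have "(\<integral>x. \<bar>f x - g x\<bar> powr p \<partial>M) \<le> (\<integral>x. ?bound x \<partial>M)"
    using int int_bound bound by (intro integral_mono_AE AE_I2) auto
  also have "\<dots> = \<delta> powr p * measure M (space M) + C powr p * measure M E"
    using E by (subst Bochner_Integration.integral_add) (auto simp: emeasure_eq_measure)
  finally show ?thesis
    unfolding Lp_close_def using int small by simp
qed

text \<open>The order of the choices: first the uniform accuracy \<open>\<delta>\<close>, then the crude bound \<open>C\<close>,
  which may depend on \<open>\<delta>\<close>, and only then the size of the exceptional set.\<close>
lemma Lp_close_off_small_set:
  assumes M: "finite_measure M" and p: "0 < p" and \<epsilon>: "0 < \<epsilon>"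
  obtains \<delta> e where "0 < \<delta>" "\<And>C. 0 < e C"
    "\<And>f g E C. f \<in> borel_measurable M \<Longrightarrow> g \<in> borel_measurable M \<Longrightarrow> E \<in> sets M \<Longrightarrow>
       measure M E < e C \<Longrightarrow> (\<And>x. x \<in> space M \<Longrightarrow> \<bar>f x - g x\<bar> \<le> C) \<Longrightarrow>
       (\<And>x. x \<in> space M - E \<Longrightarrow> \<bar>f x - g x\<bar> \<le> \<delta>) \<Longrightarrow> Lp_close M p \<epsilon> f g"
proof -
  define V where "V = measure M (space M)"
  define \<delta> where "\<delta> = (\<epsilon> / (4 * (V + 1))) powr (1 / p)"
  define e where "e C = \<epsilon> / (2 * (C powr p + 1))" for C
  have V: "0 \<le> V"
    unfolding V_def by simp
  have \<delta>: "0 < \<delta>" "\<delta> powr p = \<epsilon> / (4 * (V + 1))"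
    unfolding \<delta>_def using p \<epsilon> V by (simp_all add: powr_powr)
  have "\<epsilon> / (4 * (V + 1)) * V < \<epsilon> / 2"
    using \<epsilon> V by (simp add: field_simps add_pos_nonneg)
  then have \<delta>V: "\<delta> powr p * V < \<epsilon> / 2"
    unfolding \<delta>(2) .
  have e: "0 < e C" "C powr p * e C < \<epsilon> / 2" for C
    using \<epsilon> powr_ge_zero[of C p] by (simp_all add: e_def field_simps add_pos_nonneg)
  have "Lp_close M p \<epsilon> f g"
    if meas: "f \<in> borel_measurable M" "g \<in> borel_measurable M" and E: "E \<in> sets M"
      and small: "measure M E < e C" and C: "\<And>x. x \<in> space M \<Longrightarrow> \<bar>f x - g x\<bar> \<le> C"
      and close: "\<And>x. x \<in> space M - E \<Longrightarrow> \<bar>f x - g x\<bar> \<le> \<delta>"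
    for f g E C
  proof (rule Lp_close_exceptional_set[OF M p meas E C close])
    have "C powr p * measure M E \<le> C powr p * e C"
      using small by (intro mult_left_mono) auto
    then show "\<delta> powr p * measure M (space M) + C powr p * measure M E < \<epsilon>"
      using \<delta>V e(2)[of C] unfolding V_def by linarith
  qed (use \<delta>(1) in auto)
  with \<delta>(1) e(1) show thesis
    by (rule that)
qed

subsection \<open>Density of continuous functions\<close>

lemma Lp_close_truncation:
  fixes f :: "'a \<Rightarrow> real"
  assumes p: "0 < p" and f: "f \<in> borel_measurable M" "integrable M (\<lambda>x. \<bar>f x\<bar> powr p)" and \<epsilon>: "0 < \<epsilon>"
  obtains n :: nat where "Lp_close M p \<epsilon> f (\<lambda>x. max (- real n) (min (real n) (f x)))"
proof -
  define r where "r n x = \<bar>f x - max (- real n) (min (real n) (f x))\<bar> powr p" for n :: nat and x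
  have r_meas: "r n \<in> borel_measurable M" for n
    unfolding r_def using f(1) by measurable
  have r_le: "\<bar>r n x\<bar> \<le> \<bar>f x\<bar> powr p" for n x
    unfolding r_def using p by (auto intro!: powr_mono2)
  have "(\<lambda>n. r n x) \<longlonglongrightarrow> 0" for x
  proof (rule tendsto_eventually)
    obtain n0 :: nat where "\<bar>f x\<bar> \<le> real n0"
      using real_arch_simple by blast
    then show "\<forall>\<^sub>F n in sequentially. r n x = 0"
      unfolding eventually_sequentially r_def using p by (intro exI[of _ n0]) (auto simp: max_def min_def)
  qed
  then have "(\<lambda>n. \<integral>x. r n x \<partial>M) \<longlonglongrightarrow> (\<integral>x. 0 \<partial>M)"
    using r_meas f(2) r_le by (intro integral_dominated_convergence[where w="\<lambda>x. \<bar>f x\<bar> powr p"]) auto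
  then have "\<forall>\<^sub>F n in sequentially. (\<integral>x. r n x \<partial>M) < \<epsilon>"
    using \<epsilon> by (intro order_tendstoD(2)) simp_all
  then obtain n where "(\<integral>x. r n x \<partial>M) < \<epsilon>"
    by (auto dest: eventually_happens)
  moreover have "integrable M (\<lambda>x. r n x)"
    using f(2) r_meas by (rule Bochner_Integration.integrable_bound) (auto intro!: AE_I2 r_le)
  ultimately show thesis
    by (intro that[of n]) (simp add: Lp_close_def r_def)
qed

text \<open>A Lusin type statement for functions with finitely many values: each level set
  contains a closed set of almost full measure.\<close>
lemma finite_range_continuous_on_closed_subset:
  fixes h :: "'a::euclidean_space \<Rightarrow> real"
  assumes S: "S \<in> sets lebesgue" and h: "h \<in> borel_measurable (lebesgue_on S)"
    and fin: "finite (h ` S)" and \<eta>: "0 < \<eta>"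
  obtains F where "closed F" "F \<subseteq> S" "continuous_on F h" "S - F \<in> lmeasurable" "measure lebesgue (S - F) < \<eta>"
proof -
  define A where "A v = {x \<in> S. h x = v}" for v
  have A: "A v \<in> sets lebesgue" for v
  proof -
    have "A v = {x \<in> space (lebesgue_on S). h x = v}"
      unfolding A_def using S by simp
    also have "\<dots> \<in> sets (lebesgue_on S)"
      using h by measurable
    finally show ?thesis
      using S by (simp add: sets_restrict_space_iff)
  qed
  have "0 < \<eta> / (card (h ` S) + 1)"
    using \<eta> by simp
  then have "\<exists>T. closed T \<and> T \<subseteq> A v \<and> A v - T \<in> lmeasurable \<and>
      emeasure lebesgue (A v - T) < ennreal (\<eta> / (card (h ` S) + 1))" for v
    using sets_lebesgue_inner_closed[OF A] by metis
  then obtain T where T: "\<And>v. closed (T v)" "\<And>v. T v \<subseteq> A v" "\<And>v. A v - T v \<in> lmeasurable"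
    "\<And>v. measure lebesgue (A v - T v) < \<eta> / (card (h ` S) + 1)"
    using \<eta> by (metis emeasure_eq_measure2 ennreal_less_iff measure_nonneg)
  define F where "F = (\<Union>v\<in>h ` S. T v)"
  have sub: "S - F \<subseteq> (\<Union>v\<in>h ` S. A v - T v)"
    unfolding F_def A_def by blast
  have U: "(\<Union>v\<in>h ` S. A v - T v) \<in> lmeasurable"
    using fin T(3) by blast
  have "closed F"
    unfolding F_def using fin T(1) by (intro closed_UN) auto
  then have "F \<in> sets lebesgue"
    using lebesgue_closedin[of UNIV F] by simp
  then have SF: "S - F \<in> lmeasurable"
    using S by (intro fmeasurableI2[OF U sub]) auto
  have "measure lebesgue (S - F) \<le> measure lebesgue (\<Union>v\<in>h ` S. A v - T v)"
    using SF U sub by (intro measure_mono_fmeasurable) auto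
  also have "\<dots> \<le> (\<Sum>v\<in>h ` S. measure lebesgue (A v - T v))"
    using fin T(3) by (intro measure_UNION_le) auto
  also have "\<dots> \<le> card (h ` S) * (\<eta> / (card (h ` S) + 1))"
    using T(4) by (intro sum_bounded_above less_imp_le)
  also have "\<dots> < \<eta>"
    using \<eta> by (simp add: field_simps)
  finally have "measure lebesgue (S - F) < \<eta>" .
  moreover have "continuous_on F h"
    unfolding F_def using fin
  proof (rule continuous_on_closed_Union)
    show "continuous_on (T v) h" for v
      using T(2) unfolding A_def by (metis (mono_tags) continuous_on_const continuous_on_cong mem_Collect_eq subsetD)
  qed (rule T(1))
  ultimately show thesis
    using that fin T(1,2) SF unfolding F_def A_def by blast
qed

lemma measurable_lebesgue_on_if_borel:
  "f \<in> borel_measurable borel \<Longrightarrow> f \<in> borel_measurable (lebesgue_on S)"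
  using measurable_compose[OF id_borel_measurable_lebesgue_on] by (simp add: o_def)

lemma floor_quantization:
  fixes y \<delta> :: real
  assumes "0 < \<delta>"
  shows "0 \<le> y - \<delta> * of_int \<lfloor>y / \<delta>\<rfloor>" "y - \<delta> * of_int \<lfloor>y / \<delta>\<rfloor> \<le> \<delta>"
proof -
  have "y - \<delta> * of_int \<lfloor>y / \<delta>\<rfloor> = \<delta> * (y / \<delta> - of_int \<lfloor>y / \<delta>\<rfloor>)"
    using assms by (simp add: field_simps)
  moreover have "0 \<le> y / \<delta> - of_int \<lfloor>y / \<delta>\<rfloor>" "y / \<delta> - of_int \<lfloor>y / \<delta>\<rfloor> \<le> 1"
    by linarith+
  ultimately show "0 \<le> y - \<delta> * of_int \<lfloor>y / \<delta>\<rfloor>" "y - \<delta> * of_int \<lfloor>y / \<delta>\<rfloor> \<le> \<delta>"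
    using assms by (simp_all add: mult_left_le)
qed

lemma finite_range_floor_quantization:
  fixes h :: "'a \<Rightarrow> real"
  assumes \<delta>: "0 < \<delta>" and B: "\<And>x. x \<in> S \<Longrightarrow> \<bar>h x\<bar> \<le> B"
  shows "finite ((\<lambda>x. \<delta> * of_int \<lfloor>h x / \<delta>\<rfloor>) ` S)"
proof (rule finite_subset)
  let ?R = "\<lceil>\<bar>B\<bar> / \<delta>\<rceil>"
  show "(\<lambda>x. \<delta> * of_int \<lfloor>h x / \<delta>\<rfloor>) ` S \<subseteq> (\<lambda>i. \<delta> * of_int i) ` {- ?R..?R}"
  proof (intro image_subsetI imageI)
    fix x
    assume "x \<in> S"
    then have "\<bar>h x\<bar> \<le> \<bar>B\<bar>"
      using B by force
    then have hx: "\<bar>h x / \<delta>\<bar> \<le> \<bar>B\<bar> / \<delta>"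
      using \<delta> by (simp add: abs_div divide_right_mono)
    have "- (\<bar>B\<bar> / \<delta>) \<le> h x / \<delta>" "h x / \<delta> \<le> \<bar>B\<bar> / \<delta>"
      using abs_le_D1[OF hx] abs_le_D2[OF hx] by linarith+
    then have "\<lfloor>- (\<bar>B\<bar> / \<delta>)\<rfloor> \<le> \<lfloor>h x / \<delta>\<rfloor>" "\<lfloor>h x / \<delta>\<rfloor> \<le> \<lfloor>\<bar>B\<bar> / \<delta>\<rfloor>"
      by (simp_all only: floor_mono)
    then show "\<lfloor>h x / \<delta>\<rfloor> \<in> {- ?R..?R}"
      unfolding floor_minus by (auto intro: order_trans[OF _ floor_le_ceiling])
  qed
qed simp

text \<open>Quantize \<open>h\<close> to a function with finitely many values, make it continuous on a large
  closed set, and extend it by Tietze's theorem.\<close>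
lemma bounded_Lp_close_continuous:
  fixes h :: "'a::euclidean_space \<Rightarrow> real"
  assumes S: "S \<in> lmeasurable" and h: "h \<in> borel_measurable (lebesgue_on S)"
    and B: "\<And>x. x \<in> S \<Longrightarrow> \<bar>h x\<bar> \<le> B" and p: "0 < p" and \<epsilon>: "0 < \<epsilon>"
  obtains g where "continuous_on UNIV g" "Lp_close (lebesgue_on S) p \<epsilon> h g"
proof -
  obtain \<delta> e where \<delta>: "0 < \<delta>" and e: "\<And>C. 0 < e C"
    and close: "\<And>f g E C. f \<in> borel_measurable (lebesgue_on S) \<Longrightarrow> g \<in> borel_measurable (lebesgue_on S) \<Longrightarrow>
       E \<in> sets (lebesgue_on S) \<Longrightarrow> measure (lebesgue_on S) E < e C \<Longrightarrow>
       (\<And>x. x \<in> space (lebesgue_on S) \<Longrightarrow> \<bar>f x - g x\<bar> \<le> C) \<Longrightarrow>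
       (\<And>x. x \<in> space (lebesgue_on S) - E \<Longrightarrow> \<bar>f x - g x\<bar> \<le> \<delta>) \<Longrightarrow> Lp_close (lebesgue_on S) p \<epsilon> f g"
    using Lp_close_off_small_set[OF finite_measure_lebesgue_on[OF S] p \<epsilon>] by metis
  define hq where "hq x = \<delta> * of_int \<lfloor>h x / \<delta>\<rfloor>" for x
  have hq: "0 \<le> h x - hq x" "h x - hq x \<le> \<delta>" for x
    unfolding hq_def using floor_quantization[OF \<delta>] by auto
  have "finite (hq ` S)"
    unfolding hq_def using finite_range_floor_quantization[OF \<delta> B] .
  moreover have "hq \<in> borel_measurable (lebesgue_on S)"
    unfolding hq_def[abs_def] using h by measurable
  ultimately obtain F where F: "closed F" "F \<subseteq> S" "continuous_on F hq" "S - F \<in> lmeasurable"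
    and F_small: "measure lebesgue (S - F) < e (2 * \<bar>B\<bar> + \<delta>)"
    using finite_range_continuous_on_closed_subset[OF fmeasurableD[OF S]] e by metis
  have "norm (hq x) \<le> \<bar>B\<bar> + \<delta>" if "x \<in> F" for x
    using hq[of x] B[of x] F(2) that by auto
  then obtain g where g: "continuous_on UNIV g" "\<And>x. x \<in> F \<Longrightarrow> g x = hq x"
    and g_le: "\<And>x. norm (g x) \<le> \<bar>B\<bar> + \<delta>"
    using Tietze[OF F(3), of UNIV "\<bar>B\<bar> + \<delta>"] F(1) \<delta> by auto
  have "Lp_close (lebesgue_on S) p \<epsilon> h g"
  proof (rule close)
    show "g \<in> borel_measurable (lebesgue_on S)"
      using g(1) by (intro measurable_lebesgue_on_if_borel borel_measurable_continuous_onI)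
    show "S - F \<in> sets (lebesgue_on S)"
      using F(4) S by (simp add: sets_restrict_space_iff fmeasurableD)
    show "measure (lebesgue_on S) (S - F) < e (2 * \<bar>B\<bar> + \<delta>)"
      using S F_small by (subst measure_restrict_space) (auto simp: fmeasurableD)
    show "\<bar>h x - g x\<bar> \<le> 2 * \<bar>B\<bar> + \<delta>" if "x \<in> space (lebesgue_on S)" for x
      using that B[of x] g_le[of x] by auto
    show "\<bar>h x - g x\<bar> \<le> \<delta>" if "x \<in> space (lebesgue_on S) - (S - F)" for x
      using that hq[of x] g(2)[of x] by auto
  qed (rule h)
  with g(1) show thesis
    by (rule that)
qed

lemma continuous_Lp_dense:
  fixes f :: "'a::euclidean_space \<Rightarrow> real"
  assumes S: "S \<in> lmeasurable" and f: "f \<in> borel_measurable (lebesgue_on S)"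
    "integrable (lebesgue_on S) (\<lambda>x. \<bar>f x\<bar> powr p)" and p: "0 < p" and \<epsilon>: "0 < \<epsilon>"
  obtains g where "continuous_on UNIV g" "Lp_close (lebesgue_on S) p \<epsilon> f g"
proof -
  define \<epsilon>' where "\<epsilon>' = \<epsilon> / (2 * 2 powr p)"
  have \<epsilon>': "0 < \<epsilon>'" "2 powr p * (\<epsilon>' + \<epsilon>') = \<epsilon>"
    unfolding \<epsilon>'_def using \<epsilon> by simp_all
  obtain n :: nat where trunc: "Lp_close (lebesgue_on S) p \<epsilon>' f (\<lambda>x. max (- real n) (min (real n) (f x)))"
    using Lp_close_truncation[OF p f \<epsilon>'(1)] .
  have trunc_meas: "(\<lambda>x. max (- real n) (min (real n) (f x))) \<in> borel_measurable (lebesgue_on S)"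
    using f(1) by measurable
  have "\<bar>max (- real n) (min (real n) (f x))\<bar> \<le> real n" if "x \<in> S" for x
    by auto
  then obtain g where g: "continuous_on UNIV g"
    and close: "Lp_close (lebesgue_on S) p \<epsilon>' (\<lambda>x. max (- real n) (min (real n) (f x))) g"
    using bounded_Lp_close_continuous[OF S trunc_meas _ p \<epsilon>'(1)] by blast
  have "g \<in> borel_measurable (lebesgue_on S)"
    using g by (intro measurable_lebesgue_on_if_borel borel_measurable_continuous_onI)
  then have "Lp_close (lebesgue_on S) p (2 powr p * (\<epsilon>' + \<epsilon>')) f g"
    using Lp_close_trans[OF p f(1) trunc_meas _ trunc close] by simp
  with g show thesis
    unfolding \<epsilon>'(2) by (rule that)
qed

section \<open>Density of the networks\<close>

lemma frac_borel_measurable [measurable]: "(frac :: real \<Rightarrow> real) \<in> borel_measurable borel"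
proof -
  have "frac = (\<lambda>x::real. x - real_of_int \<lfloor>x\<rfloor>)"
    by (auto simp: frac_def)
  moreover have "(\<lambda>x::real. x - real_of_int \<lfloor>x\<rfloor>) \<in> borel_measurable borel"
    by measurable
  ultimately show ?thesis
    by simp
qed

lemma scaled_coord_borel_measurable:
  "(\<lambda>x::real^'n::finite. scaled_coord a b K x k) \<in> borel_measurable borel"
proof -
  have "(\<lambda>x::real^'n. x $ k) \<in> borel_measurable borel"
    by (intro borel_measurable_continuous_onI continuous_intros)
  then show ?thesis
    unfolding scaled_coord_def by measurable
qed

lemma away_from_grid_mono:
  "away_from_grid a b K \<eta> x \<Longrightarrow> \<eta>' \<le> \<eta> \<Longrightarrow> away_from_grid a b K \<eta>' x"
  unfolding away_from_grid_def by (metis diff_left_mono order.trans)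

lemma frac_margin_exists:
  fixes s :: "'n::finite \<Rightarrow> real"
  assumes "\<And>k. frac (s k) \<noteq> 0"
  obtains \<eta> where "0 < \<eta>" "\<And>k. \<eta> \<le> frac (s k) \<and> frac (s k) \<le> 1 - \<eta>"
proof
  define m where "m k = min (frac (s k)) (1 - frac (s k))" for k
  show "0 < Min (range m)"
    unfolding m_def using assms frac_ge_0 by (simp add: Min_gr_iff frac_lt_1 order.not_eq_order_implies_strict)
  show "Min (range m) \<le> frac (s k) \<and> frac (s k) \<le> 1 - Min (range m)" for k
    using Min_le[of "range m" "m k"] unfolding m_def by auto
qed

lemma grid_null_sets:
  fixes a b :: real
  assumes "a < b" "0 < K"
  obtains G where "G \<in> null_sets lebesgue" "{x :: real^'n. \<exists>k. frac (scaled_coord a b K x k) = 0} \<subseteq> G"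
proof
  show "(\<Union>k. \<Union>j::int. {x :: real^'n. axis k 1 \<bullet> x = a + of_int j * (b - a) / K}) \<in> null_sets lebesgue"
    by (intro null_sets_UN' countableI_type negligible_hyperplane[unfolded negligible_iff_null_sets])
      (simp add: axis_eq_0_iff)
  show "{x :: real^'n. \<exists>k. frac (scaled_coord a b K x k) = 0}
      \<subseteq> (\<Union>k. \<Union>j::int. {x. axis k 1 \<bullet> x = a + of_int j * (b - a) / K})"
  proof safe
    fix x :: "real^'n" and k
    assume "frac (scaled_coord a b K x k) = 0"
    then obtain j where "scaled_coord a b K x k = of_int j"
      by (auto simp: frac_eq_0_iff elim: Ints_cases)
    then have "x $ k = a + of_int j * (b - a) / K"
      using assms by (simp add: scaled_coord_def field_simps)
    then show "x \<in> (\<Union>k. \<Union>j::int. {x. axis k 1 \<bullet> x = a + of_int j * (b - a) / K})"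
      by (auto simp: inner_axis')
  qed
qed

lemma near_grid_sets:
  "{x \<in> cube a b. \<not> away_from_grid a b K \<eta> x} \<in> sets (lebesgue_on (cube a b :: (real^'n::finite) set))"
proof -
  let ?M = "lebesgue_on (cube a b) :: (real^'n) measure"
  have [measurable]: "(\<lambda>x. scaled_coord a b K x k) \<in> borel_measurable ?M" for k
    by (intro measurable_lebesgue_on_if_borel scaled_coord_borel_measurable)
  have "{x \<in> cube a b. \<not> away_from_grid a b K \<eta> x} = {x \<in> space ?M. \<not> (\<forall>k\<in>UNIV.
      \<eta> \<le> frac (scaled_coord a b K x k) \<and> frac (scaled_coord a b K x k) \<le> 1 - \<eta>)}"
    unfolding away_from_grid_def cube_def by simp
  also have "\<dots> \<in> sets ?M"
    by measurable
  finally show ?thesis .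
qed

lemma away_from_grid_eventually:
  assumes "\<And>k. frac (scaled_coord a b K x k) \<noteq> 0"
  obtains n :: nat where "away_from_grid a b K (1 / (real n + 1)) x"
proof -
  obtain \<eta> where \<eta>: "0 < \<eta>" "away_from_grid a b K \<eta> x"
    using frac_margin_exists[of "scaled_coord a b K x", OF assms] unfolding away_from_grid_def by auto
  obtain n :: nat where "1 / (real n + 1) < \<eta>"
    using \<eta>(1) nat_approx_posE by (metis of_nat_Suc add.commute)
  then show thesis
    using \<eta>(2) by (intro that[of n]) (simp add: away_from_grid_mono)
qed

text \<open>The sets of points within \<open>1 / (n + 1)\<close> of the grid decrease to the grid, a null set.\<close>
lemma near_grid_measure_small:
  assumes ab: "a < b" and K: "1 \<le> K" and e: "0 < e"
  obtains \<eta> where "0 < \<eta>"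
    "measure (lebesgue_on (cube a b :: (real^'n::finite) set)) {x \<in> cube a b. \<not> away_from_grid a b K \<eta> x} < e"
proof -
  let ?M = "lebesgue_on (cube a b) :: (real^'n) measure"
  define A where "A n = {x \<in> cube a b :: (real^'n) set. \<not> away_from_grid a b K (1 / (real n + 1)) x}" for n
  have cube: "cube a b \<in> sets lebesgue"
    unfolding cube_def by simp
  have A_sets: "A n \<in> sets ?M" for n
    unfolding A_def by (rule near_grid_sets)
  have "A (Suc n) \<subseteq> A n" for n
    unfolding A_def using away_from_grid_mono[of a b K "1 / (real n + 1)" _ "1 / (real (Suc n) + 1)"]
    by (auto simp: frac_le)
  then have "(\<lambda>n. measure ?M (A n)) \<longlonglongrightarrow> measure ?M (\<Inter>n. A n)"
    using A_sets by (intro finite_measure.finite_Lim_measure_decseq finite_measure_lebesgue_on decseq_SucI)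
      (auto simp: cube_def)
  moreover have "measure ?M (\<Inter>n. A n) = 0"
  proof -
    obtain G where G: "G \<in> null_sets lebesgue" "{x :: real^'n. \<exists>k. frac (scaled_coord a b K x k) = 0} \<subseteq> G"
      using grid_null_sets[OF ab, of K] K by auto
    have "(\<Inter>n. A n) \<subseteq> {x. \<exists>k. frac (scaled_coord a b K x k) = 0}"
    proof (rule subsetI, rule ccontr)
      fix x
      assume x: "x \<in> (\<Inter>n. A n)" and "x \<notin> {x. \<exists>k. frac (scaled_coord a b K x k) = 0}"
      then obtain n where "away_from_grid a b K (1 / (real n + 1)) x"
        by (metis (mono_tags, lifting) away_from_grid_eventually mem_Collect_eq)
      with x show False
        unfolding A_def by blast
    qed
    then have "(\<Inter>n. A n) \<subseteq> G"
      using G(2) by (rule order_trans)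
    moreover have "(\<Inter>n. A n) \<in> sets ?M"
      using A_sets by (intro sets.countable_INT) auto
    then have "(\<Inter>n. A n) \<in> sets lebesgue"
      using cube sets_restrict_space_iff[of "cube a b" lebesgue] by auto
    ultimately have "(\<Inter>n. A n) \<in> null_sets lebesgue"
      using null_sets_subset[OF G(1)] by blast
    then show ?thesis
      using cube by (subst measure_restrict_space) (auto simp: A_def measure_eq_0_null_sets)
  qed
  ultimately have "\<forall>\<^sub>F n in sequentially. measure ?M (A n) < e"
    using e by (simp add: order_tendstoD)
  then obtain n where "measure ?M (A n) < e"
    by (auto dest: eventually_happens)
  then show thesis
    by (intro that[of "1 / (real n + 1)"]) (simp_all add: A_def)
qed

lemma cell_corner_in_cube:
  assumes "a < b" "0 < K"
  shows "cell_corner a b K \<iota> m \<in> cube a b"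
proof -
  have "(b - a) / K * real (m div K ^ \<iota> k mod K) \<le> (b - a) / K * K" for k
    using assms by (intro mult_left_mono) (auto simp: less_imp_le)
  moreover have "(b - a) / K * K = b - a"
    using assms by simp
  moreover have "0 \<le> (b - a) / K * real (m div K ^ \<iota> k mod K)" for k
    using assms by simp
  ultimately have "a \<le> a + (b - a) / K * real (m div K ^ \<iota> k mod K)"
    "a + (b - a) / K * real (m div K ^ \<iota> k mod K) \<le> b" for k
    by (metis add_le_cancel_left le_add_same_cancel1 diff_add_cancel add.commute)+
  then show ?thesis
    by (simp add: cell_corner_def cube_def mem_box_cart)
qed

lemma continuous_close_cell_corner:
  fixes g :: "real^'n::finite \<Rightarrow> real"
  assumes ab: "a < b" and g: "continuous_on UNIV g" and \<delta>: "0 < \<delta>"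
  obtains K where "1 \<le> K"
    "\<And>\<iota> \<eta> x. bij_betw \<iota> UNIV {..<CARD('n)} \<Longrightarrow> 0 < \<eta> \<Longrightarrow> x \<in> cube a b \<Longrightarrow> away_from_grid a b K \<eta> x \<Longrightarrow>
       \<bar>g x - g (cell_corner a b K \<iota> (cell_code a b K \<iota> x))\<bar> < \<delta>"
proof -
  have "uniformly_continuous_on (cube a b) g"
    unfolding cube_def using g by (intro compact_uniformly_continuous) (auto intro: continuous_on_subset)
  then obtain \<rho> where \<rho>: "0 < \<rho>"
    and close: "\<And>x x'. x \<in> cube a b \<Longrightarrow> x' \<in> cube a b \<Longrightarrow> dist x' x < \<rho> \<Longrightarrow> \<bar>g x' - g x\<bar> < \<delta>"
    using \<delta> unfolding uniformly_continuous_on_def dist_real_def by metis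
  obtain n :: nat where "real CARD('n) * (b - a) / \<rho> < real n"
    using reals_Archimedean2 by blast
  define K where "K = Suc n"
  then have K1: "1 \<le> K" and K: "real CARD('n) * (b - a) / real K < \<rho>"
    using \<rho> ab \<open>real CARD('n) * (b - a) / \<rho> < real n\<close> by (simp_all add: field_simps)
  show thesis
  proof (rule that[OF K1])
    fix \<iota> :: "'n \<Rightarrow> nat" and \<eta> and x :: "real^'n"
    assume x: "bij_betw \<iota> UNIV {..<CARD('n)}" "0 < \<eta>" "x \<in> cube a b" "away_from_grid a b K \<eta> x"
    let ?y = "cell_corner a b K \<iota> (cell_code a b K \<iota> x)"
    have "dist x ?y < \<rho>"
      using dist_cell_corner[OF x(1,3) ab x(4,2)] K by linarith
    then show "\<bar>g x - g ?y\<bar> < \<delta>"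
      using close[OF cell_corner_in_cube[OF ab] x(3)] K1 by (simp add: dist_commute)
  qed
qed

text \<open>The network reproduces the values of \<open>g\<close> at the cell corners, rescaled into \<open>[0, 1]\<close>.
  The bound \<open>C\<close> does not depend on the margin \<open>\<eta>\<close>, which is chosen afterwards.\<close>
lemma NN_approx_off_grid:
  fixes g :: "real^'n::finite \<Rightarrow> real"
  assumes ab: "a < b" and g: "continuous_on UNIV g" and N: "4 * CARD('n) \<le> N" and L: "5 \<le> L"
    and \<delta>: "0 < \<delta>"
  obtains K C where "1 \<le> K"
    "\<And>\<eta>. 0 < \<eta> \<Longrightarrow> \<exists>\<phi>\<in>NN_class N L. (\<forall>x\<in>cube a b. \<bar>\<phi> x - g x\<bar> \<le> C) \<and>
       (\<forall>x\<in>cube a b. away_from_grid a b K \<eta> x \<longrightarrow> \<bar>\<phi> x - g x\<bar> \<le> \<delta>)"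
proof -
  have "compact (g ` cube a b)"
    unfolding cube_def using g by (intro compact_continuous_image) (auto intro: continuous_on_subset)
  then obtain M where M: "0 < M" "\<And>x. x \<in> cube a b \<Longrightarrow> \<bar>g x\<bar> \<le> M"
    by (metis compact_imp_bounded bounded_pos image_eqI real_norm_def)
  obtain K where K: "1 \<le> K" and corner: "\<And>\<iota> \<eta> x. bij_betw \<iota> UNIV {..<CARD('n)} \<Longrightarrow> 0 < \<eta> \<Longrightarrow>
      x \<in> cube a b \<Longrightarrow> away_from_grid a b K \<eta> x \<Longrightarrow>
      \<bar>g x - g (cell_corner a b K \<iota> (cell_code a b K \<iota> x))\<bar> < \<delta> / 2"
    using continuous_close_cell_corner[OF ab g, of "\<delta> / 2"] \<delta> by auto
  obtain \<iota> :: "'n \<Rightarrow> nat" where \<iota>: "bij_betw \<iota> UNIV {..<CARD('n)}"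
    using ex_bij_betw_finite_nat[of "UNIV :: 'n set"] by (auto simp: atLeast0LessThan)
  define y where "y m = (g (cell_corner a b K \<iota> m) + M) / (2 * M)" for m
  have "0 \<le> y m \<and> y m \<le> 1" for m
    using M(2)[OF cell_corner_in_cube[OF ab, of K \<iota> m]] M(1) K unfolding y_def
    by (auto simp: field_simps abs_le_iff)
  then obtain c t where c: "0 < c" and t: "\<And>m. m < K ^ CARD('n) \<Longrightarrow>
      \<bar>sigma1 (t / (of_nat m + c + 1)) - y m\<bar> < min 1 (\<delta> / (4 * M))"
    using triangle_wave_interpolation[of "K ^ CARD('n)" y "min 1 (\<delta> / (4 * M))"] \<delta> M(1) by auto
  have "\<exists>\<phi>\<in>NN_class N L. (\<forall>x\<in>cube a b. \<bar>\<phi> x - g x\<bar> \<le> 4 * M) \<and>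
       (\<forall>x\<in>cube a b. away_from_grid a b K \<eta> x \<longrightarrow> \<bar>\<phi> x - g x\<bar> \<le> \<delta>)" if \<eta>: "0 < \<eta>" for \<eta>
  proof -
    obtain \<phi> where \<phi>: "\<phi> \<in> NN_class N L" and bound: "\<And>x. \<bar>\<phi> x - - M\<bar> \<le> \<bar>2 * M\<bar>"
      and val: "\<And>x. x \<in> cube a b \<Longrightarrow> away_from_grid a b K \<eta> x \<Longrightarrow>
        \<phi> x = 2 * M * sigma1 (t / (real (cell_code a b K \<iota> x) + c + 1)) + - M"
      using grid_network[OF \<iota> N L ab K \<eta> c] by metis
    have "\<bar>\<phi> x - g x\<bar> \<le> \<delta>" if x: "x \<in> cube a b" "away_from_grid a b K \<eta> x" for x
    proof -
      let ?m = "cell_code a b K \<iota> x"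
      have "g (cell_corner a b K \<iota> ?m) = 2 * M * y ?m - M"
        unfolding y_def using M(1) by (simp add: field_simps)
      then have "\<phi> x - g (cell_corner a b K \<iota> ?m) = 2 * M * (sigma1 (t / (real ?m + c + 1)) - y ?m)"
        using val[OF x] by (simp add: algebra_simps)
      then have "\<bar>\<phi> x - g (cell_corner a b K \<iota> ?m)\<bar> = 2 * M * \<bar>sigma1 (t / (real ?m + c + 1)) - y ?m\<bar>"
        using M(1) by (simp add: abs_mult)
      also have "\<dots> \<le> 2 * M * (\<delta> / (4 * M))"
        using t[OF cell_code_digits(1)[OF \<iota> x(1) ab x(2) \<eta>]] M(1) by (intro mult_left_mono) auto
      also have "\<dots> = \<delta> / 2"
        using M(1) by simp
      finally show ?thesis
        using corner[OF \<iota> \<eta> x] by linarith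
    qed
    moreover have "\<bar>\<phi> x - g x\<bar> \<le> 4 * M" if "x \<in> cube a b" for x
      using bound[of x] M(1) M(2)[OF that] by (simp add: abs_le_iff)
    ultimately show ?thesis
      using \<phi> by blast
  qed
  with K show thesis
    by (rule that)
qed

lemma NN_Lp_close_continuous:
  fixes g :: "real^'n::finite \<Rightarrow> real"
  assumes ab: "a < b" and p: "0 < p" and g: "continuous_on UNIV g"
    and N: "4 * CARD('n) \<le> N" and L: "5 \<le> L" and \<epsilon>: "0 < \<epsilon>"
  obtains \<phi> where "\<phi> \<in> NN_class N L" "Lp_close (lebesgue_on (cube a b)) p \<epsilon> \<phi> g"
proof -
  let ?M = "lebesgue_on (cube a b) :: (real^'n) measure"
  have cube: "cube a b \<in> lmeasurable"
    unfolding cube_def by simp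
  obtain \<delta> e where \<delta>: "0 < \<delta>" and e: "\<And>C. 0 < e C"
    and close: "\<And>f g E C. f \<in> borel_measurable ?M \<Longrightarrow> g \<in> borel_measurable ?M \<Longrightarrow> E \<in> sets ?M \<Longrightarrow>
       measure ?M E < e C \<Longrightarrow> (\<And>x. x \<in> space ?M \<Longrightarrow> \<bar>f x - g x\<bar> \<le> C) \<Longrightarrow>
       (\<And>x. x \<in> space ?M - E \<Longrightarrow> \<bar>f x - g x\<bar> \<le> \<delta>) \<Longrightarrow> Lp_close ?M p \<epsilon> f g"
    using Lp_close_off_small_set[OF finite_measure_lebesgue_on[OF cube] p \<epsilon>] by metis
  obtain K C where K: "1 \<le> K" and approx: "\<And>\<eta>. 0 < \<eta> \<Longrightarrow> \<exists>\<phi>\<in>NN_class N L.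
      (\<forall>x\<in>cube a b. \<bar>\<phi> x - g x\<bar> \<le> C) \<and> (\<forall>x\<in>cube a b. away_from_grid a b K \<eta> x \<longrightarrow> \<bar>\<phi> x - g x\<bar> \<le> \<delta>)"
    using NN_approx_off_grid[OF ab g N L \<delta>] by metis
  obtain \<eta> where \<eta>: "0 < \<eta>" and small: "measure ?M {x \<in> cube a b. \<not> away_from_grid a b K \<eta> x} < e C"
    using near_grid_measure_small[OF ab K e] by metis
  obtain \<phi> where \<phi>: "\<phi> \<in> NN_class N L" and C: "\<forall>x\<in>cube a b. \<bar>\<phi> x - g x\<bar> \<le> C"
    and off_grid: "\<forall>x\<in>cube a b. away_from_grid a b K \<eta> x \<longrightarrow> \<bar>\<phi> x - g x\<bar> \<le> \<delta>"
    using approx[OF \<eta>] by blast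
  have "Lp_close ?M p \<epsilon> \<phi> g"
  proof (rule close[OF _ _ _ small])
    show "\<phi> \<in> borel_measurable ?M"
      using \<phi> by (intro measurable_lebesgue_on_if_borel NN_class_measurable)
    show "g \<in> borel_measurable ?M"
      using g by (intro measurable_lebesgue_on_if_borel borel_measurable_continuous_onI)
    show "{x \<in> cube a b. \<not> away_from_grid a b K \<eta> x} \<in> sets ?M"
      by (rule near_grid_sets)
  qed (use C off_grid in auto)
  with \<phi> show thesis
    by (rule that)
qed

theorem corollary3:
  fixes a b p \<epsilon> :: real and N L :: nat and f :: "real^'n \<Rightarrow> real"
  assumes "a < b" and "1 \<le> p"
    and "N \<ge> 36 * CARD('n) * (2 * CARD('n) + 1)" and "L \<ge> 11"
    and "f \<in> borel_measurable (lebesgue_on (cube a b))"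
    and "integrable (lebesgue_on (cube a b)) (\<lambda>x. \<bar>f x\<bar> powr p)"
    and "\<epsilon> > 0"
  shows "\<exists>\<phi>\<in>NN_class N L.
           integrable (lebesgue_on (cube a b)) (\<lambda>x. \<bar>\<phi> x - f x\<bar> powr p) \<and>
           (\<integral>x. \<bar>\<phi> x - f x\<bar> powr p \<partial>lebesgue_on (cube a b)) powr (1 / p) < \<epsilon>"
proof -
  let ?M = "lebesgue_on (cube a b) :: (real^'n) measure"
  define \<epsilon>' where "\<epsilon>' = \<epsilon> powr p / (2 * 2 powr p)"
  have p: "0 < p" and \<epsilon>': "0 < \<epsilon>'" "2 powr p * (\<epsilon>' + \<epsilon>') = \<epsilon> powr p"
    using assms(2,7) by (simp_all add: \<epsilon>'_def)
  have "4 * CARD('n) \<le> 36 * CARD('n) * (2 * CARD('n) + 1)"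
    by simp
  then have N: "4 * CARD('n) \<le> N" and L: "5 \<le> L"
    using assms(3,4) by linarith+
  obtain g where g: "continuous_on UNIV g" and fg: "Lp_close ?M p \<epsilon>' f g"
    using continuous_Lp_dense[OF _ assms(5,6) p \<epsilon>'(1)] by (auto simp: cube_def)
  obtain \<phi> where \<phi>: "\<phi> \<in> NN_class N L" and \<phi>g: "Lp_close ?M p \<epsilon>' \<phi> g"
    using NN_Lp_close_continuous[OF assms(1) p g N L \<epsilon>'(1)] by blast
  have "\<phi> \<in> borel_measurable ?M" "g \<in> borel_measurable ?M"
    using \<phi> g by (auto intro: measurable_lebesgue_on_if_borel NN_class_measurable borel_measurable_continuous_onI)
  then have "Lp_close ?M p (\<epsilon> powr p) \<phi> f"
    using Lp_close_trans[OF p _ _ assms(5) \<phi>g Lp_close_commute[THEN iffD1, OF fg]] \<epsilon>'(2) by simp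
  moreover have "x powr (1 / p) < \<epsilon>" if "0 \<le> x" "x < \<epsilon> powr p" for x
    using powr_less_mono2[of "1 / p" x "\<epsilon> powr p"] that p assms(7) by (simp add: powr_powr)
  ultimately show ?thesis
    using \<phi> unfolding Lp_close_def by (auto intro: integral_nonneg_AE)
qed

end
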